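(* For the redundancy-$d$ COC model described in the context, in stationarity and assuming stability, with $C=\binom Kd$ and $\pi((0))$ the stationary probability of the empty system, for complex $|z|<1$ $$\mathbb E[z^M]=\sum_{i=0}^{C}\sum_{(T_1,\dots,T_i)}\frac{(\lambda z)^i\pi((0))}{\prod_{j=1}^i\big(\mu C F_j(T_1,\dots,T_j)-j\lambda z\big)},$$ and the sojourn time $S$ of an arbitrary customer satisfies, for $\operatorname{Re}(s)>0$ and with $t_1$ any fixed token, $$\mathbb E[e^{-sS}]=\sum_{i=0}^{C}\sum_{(T_1,\dots,T_i)}\frac{\lambda-sC\mathbf 1\{t_1\in\{T_1,\dots,T_i\}\}}{\lambda}\cdot\frac{\lambda^i\pi((0))}{\prod_{j=1}^i\big(\mu CF_j(T_1,\dots,T_j)-j\lambda+sC\mathbf 1\{t_1\in\{T_1,\dots,T_j\}\}\big)},$$ where $M$ is the number of customers in the system and the sums run over ordered tuples of distinct tokens.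
   Context: Redundancy-$d$ COC model: $K$ homogeneous servers, each with its own FCFS queue, serving at exponential rate $\mu$. Customers arrive as a Poisson process with rate $\lambda$; each picks a uniformly random set of $d$ of the $K$ servers and sends a copy to each, copies having independent exponential($\mu$) service requirements; when any copy completes, all copies of that customer are removed. Customer types correspond to the $\binom Kd$ server subsets, each with arrival rate $\lambda/\binom Kd$. Token representation: one token per type, held by the oldest customer of that type present; the tokens are $t_1,\dots,t_{\binom Kd}$. State: $(0)$ or $(T_1,n_1,\dots,T_i,n_i)$ with $T_1,\dots,T_i$ distinct held tokens ordered by arrival of their holders and $n_j$ the number of non-holding customers arriving between holders of $T_j$ and $T_{j+1}$. $F_j(T_1,\dots,T_j)$ denotes the number of servers in the union of the server sets of the types corresponding to $T_1,\dots,T_j$. *)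

theory Defs
  imports "HOL-Analysis.Analysis"
begin

text \<open>Servers are 0..K-1; a customer type is a d-subset of servers.
  A system state is the list of types of customers present, in order of arrival
  (oldest first).\<close>

definition Types :: "nat \<Rightarrow> nat \<Rightarrow> nat set set" where
  "Types K d = {A. A \<subseteq> {..<K} \<and> card A = d}"

definition States :: "nat \<Rightarrow> nat \<Rightarrow> nat set list set" where
  "States K d = {xs. set xs \<subseteq> Types K d}"

text \<open>Departure rate of the j-th customer (0-based, in arrival order): each server
  serves (FCFS) the oldest customer holding a copy there, at rate mu; a customer
  is therefore in service at the servers of its type not used by older customers.\<close>
definition svc_rate :: "real \<Rightarrow> nat set list \<Rightarrow> nat \<Rightarrow> real" where
  "svc_rate mu xs j = mu * real (card (xs ! j - \<Union> (set (take j xs))))"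

definition ins_at :: "nat \<Rightarrow> 'a \<Rightarrow> 'a list \<Rightarrow> 'a list" where
  "ins_at j T xs = take j xs @ T # drop j xs"

definition del_at :: "nat \<Rightarrow> 'a list \<Rightarrow> 'a list" where
  "del_at j xs = take j xs @ drop (Suc j) xs"

text \<open>Stationary distribution of the CTMC (global balance equations); arrivals of
  each type at rate lam / (K choose d).\<close>
definition stationary_dist ::
  "nat \<Rightarrow> nat \<Rightarrow> real \<Rightarrow> real \<Rightarrow> (nat set list \<Rightarrow> real) \<Rightarrow> bool" where
  "stationary_dist K d lam mu p \<longleftrightarrow>
     (\<forall>xs\<in>States K d. p xs \<ge> 0) \<and> (p has_sum 1) (States K d) \<and>
     (\<forall>xs\<in>States K d.
        p xs * (lam + (\<Sum>j<length xs. svc_rate mu xs j)) =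
          (if xs = [] then 0 else p (butlast xs) * lam / real (K choose d))
          + (\<Sum>j\<le>length xs. \<Sum>T\<in>Types K d.
               p (ins_at j T xs) * svc_rate mu (ins_at j T xs) j))"

text \<open>Laplace--Stieltjes transform of the remaining sojourn time of the tagged
  customer (the last one in the list), by first-step analysis.  Customers that
  arrive later never affect the tagged customer, so only those ahead matter.
  The first argument n is fuel, equal to the length of the list.\<close>
fun tagged_lt_aux :: "real \<Rightarrow> complex \<Rightarrow> nat \<Rightarrow> nat set list \<Rightarrow> complex" where
  "tagged_lt_aux mu s 0 xs = 1"
| "tagged_lt_aux mu s (Suc n) xs =
     (complex_of_real (svc_rate mu xs (length xs - 1))
      + (\<Sum>j<length xs - 1. complex_of_real (svc_rate mu xs j)
                              * tagged_lt_aux mu s n (del_at j xs)))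
     / (complex_of_real (\<Sum>j<length xs. svc_rate mu xs j) + s)"

definition tagged_lt :: "real \<Rightarrow> complex \<Rightarrow> nat set list \<Rightarrow> complex" where
  "tagged_lt mu s xs = tagged_lt_aux mu s (length xs) xs"

definition gen_fun_M :: "nat \<Rightarrow> nat \<Rightarrow> (nat set list \<Rightarrow> real) \<Rightarrow> complex \<Rightarrow> complex" where
  "gen_fun_M K d p z = (\<Sum>\<^sub>\<infinity>xs\<in>States K d. complex_of_real (p xs) * z ^ length xs)"

text \<open>E[exp(-sS)] for an arbitrary customer: by PASTA it sees the stationary state
  and has a uniformly random type.\<close>
definition sojourn_LST ::
  "nat \<Rightarrow> nat \<Rightarrow> real \<Rightarrow> (nat set list \<Rightarrow> real) \<Rightarrow> complex \<Rightarrow> complex" where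
  "sojourn_LST K d mu p s =
     (\<Sum>\<^sub>\<infinity>xs\<in>States K d. complex_of_real (p xs) *
        ((\<Sum>T\<in>Types K d. tagged_lt mu s (xs @ [T])) / of_nat (K choose d)))"

definition Tuples :: "nat \<Rightarrow> nat \<Rightarrow> nat \<Rightarrow> nat set list set" where
  "Tuples K d i = {ts. distinct ts \<and> set ts \<subseteq> Types K d \<and> length ts = i}"

definition F :: "nat set list \<Rightarrow> nat \<Rightarrow> nat" where
  "F ts j = card (\<Union> (set (take j ts)))"

end

theory Submission
  imports Defs "HOL-Complex_Analysis.Complex_Analysis"
begin

text \<open>In stationarity the state, read as the list of customer types in arrival order, has the
  product-form law \<open>\<pi>(x) = \<pi>(0) \<Prod>\<^sub>k (lam / C) / (mu F\<^sub>k(x))\<close>: it satisfies partial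
  balance, and a minimum-of-two-solutions argument shows that every stationary distribution equals
  it.  Summing the product weights over all lists, grouped by the order in which new types (tokens)
  first appear, a run of customers whose type is already present contributes a geometric series;
  this yields the formula for \<open>E[z\<^sup>M]\<close>, and the finiteness of the total mass yields the stability
  condition \<open>j lam < mu C F\<^sub>j\<close> that makes the series converge.

  For the sojourn time, tag a type-T customer arriving to the stationary state and mark every
  type-T customer behind it by \<open>\<zeta> = 1 - s C / lam\<close>.  The marked product weights of the
  states seen from the tagged customer solve the balance equations of the time-reversed motion of
  the customers in front of it; pairing them with the first-step equations of the tagged
  customer's Laplace transform evaluates \<open>E[exp(-s S)]\<close> as the marked token sum when s is close
  to \<open>lam / C\<close>.  Relabelling servers shows that the result does not depend on T, and analytic
  continuation extends it to \<open>Re s > 0\<close>.\<close>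

definition servers :: "nat set list \<Rightarrow> nat set" where
  "servers xs = \<Union> (set xs)"

lemma servers_simps [simp]:
  "servers [] = {}"
  "servers (t # xs) = t \<union> servers xs"
  "servers (xs @ ys) = servers xs \<union> servers ys"
  by (auto simp: servers_def)

lemma finite_Types: "finite (Types K d)"
proof -
  have "Types K d \<subseteq> Pow {..<K}" by (auto simp: Types_def)
  then show ?thesis by (rule finite_subset) simp
qed

lemma card_Types: "card (Types K d) = K choose d"
  unfolding Types_def using n_subsets[of "{..<K}" d] by simp

lemma Types_finite: "t \<in> Types K d \<Longrightarrow> finite t"
  unfolding Types_def by (auto intro: finite_subset)

lemma Types_card: "t \<in> Types K d \<Longrightarrow> card t = d"
  unfolding Types_def by auto

lemma Types_subset: "t \<in> Types K d \<Longrightarrow> t \<subseteq> {..<K}"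
  unfolding Types_def by auto

lemma Types_nonempty: "1 \<le> d \<Longrightarrow> t \<in> Types K d \<Longrightarrow> t \<noteq> {}"
  unfolding Types_def by auto

lemma finite_servers: "set xs \<subseteq> Types K d \<Longrightarrow> finite (servers xs)"
  by (induction xs) (auto simp: Types_finite)

lemma servers_subset: "set xs \<subseteq> Types K d \<Longrightarrow> servers xs \<subseteq> {..<K}"
  by (induction xs) (auto dest: Types_subset)

lemma card_Un_Diff: "finite A \<Longrightarrow> finite B \<Longrightarrow> card (A \<union> B) = card A + card (B - A)"
  by (metis Diff_disjoint Un_Diff_cancel card_Un_disjoint finite_Diff)

lemma ins_at_0 [simp]: "ins_at 0 t xs = t # xs"
  by (simp add: ins_at_def)

lemma ins_at_Suc_Cons [simp]: "ins_at (Suc j) t (a # xs) = a # ins_at j t xs"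
  by (simp add: ins_at_def)

lemma ins_at_length: "ins_at (length xs) t xs = xs @ [t]"
  by (simp add: ins_at_def)

lemma length_ins_at [simp]: "j \<le> length xs \<Longrightarrow> length (ins_at j t xs) = Suc (length xs)"
  by (simp add: ins_at_def)

lemma nth_ins_at [simp]: "j \<le> length xs \<Longrightarrow> ins_at j t xs ! j = t"
  by (simp add: ins_at_def nth_append)

lemma take_ins_at [simp]: "j \<le> length xs \<Longrightarrow> take j (ins_at j t xs) = take j xs"
  by (simp add: ins_at_def)

lemma set_ins_at [simp]: "set (ins_at j t xs) = insert t (set xs)"
  unfolding ins_at_def by (metis append_take_drop_id set_append list.set(2) Un_insert_right)

lemma servers_ins_at [simp]: "servers (ins_at j t xs) = t \<union> servers xs"
  by (simp add: servers_def)

lemma ins_at_snoc: "j \<le> length xs \<Longrightarrow> ins_at j t (xs @ [u]) = ins_at j t xs @ [u]"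
  by (simp add: ins_at_def)

lemma del_at_ins_at [simp]: "j \<le> length xs \<Longrightarrow> del_at j (ins_at j t xs) = xs"
  by (simp add: ins_at_def del_at_def)

lemma ins_at_del_at: "j < length xs \<Longrightarrow> ins_at j (xs ! j) (del_at j xs) = xs"
  unfolding ins_at_def del_at_def by (simp add: Cons_nth_drop_Suc min_def)

lemma length_del_at [simp]: "j < length xs \<Longrightarrow> length (del_at j xs) = length xs - 1"
  by (simp add: del_at_def)

lemma set_del_at_subset: "set (del_at j xs) \<subseteq> set xs"
  unfolding del_at_def by (auto dest: in_set_takeD in_set_dropD)

lemma del_at_snoc: "j < length xs \<Longrightarrow> del_at j (xs @ [u]) = del_at j xs @ [u]"
  by (simp add: del_at_def)

lemma svc_rate_servers: "svc_rate mu xs j = mu * real (card (xs ! j - servers (take j xs)))"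
  by (simp add: svc_rate_def servers_def)

lemma svc_rate_nonneg: "mu \<ge> 0 \<Longrightarrow> svc_rate mu xs j \<ge> 0"
  by (simp add: svc_rate_def)

lemma svc_rate_snoc: "j < length xs \<Longrightarrow> svc_rate mu (xs @ [t]) j = svc_rate mu xs j"
  by (simp add: svc_rate_servers nth_append)

lemma svc_rate_snoc_last: "svc_rate mu (xs @ [t]) (length xs) = mu * real (card (t - servers xs))"
  by (simp add: svc_rate_servers nth_append)

lemma svc_rate_ins_at:
  "j \<le> length xs \<Longrightarrow> svc_rate mu (ins_at j t xs) j = mu * real (card (t - servers (take j xs)))"
  by (simp add: svc_rate_servers)

lemma sum_svc_rate:
  assumes "\<forall>t\<in>set xs. finite t"
  shows "(\<Sum>j<length xs. svc_rate mu xs j) = mu * real (card (servers xs))"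
  using assms
proof (induction xs rule: rev_induct)
  case Nil
  then show ?case by simp
next
  case (snoc t xs)
  then have "finite (servers xs)" "finite t"
    by (auto simp: servers_def)
  then have "card (servers (xs @ [t])) = card (servers xs) + card (t - servers xs)"
    by (simp add: card_Un_Diff)
  with snoc show ?case
    by (simp add: svc_rate_snoc svc_rate_snoc_last algebra_simps)
qed

fun weight :: "(nat set \<Rightarrow> 'a::field) \<Rightarrow> nat set \<Rightarrow> nat set list \<Rightarrow> 'a" where
  "weight h V [] = 1"
| "weight h V (t # b) = h t / of_nat (card (V \<union> t)) * weight h (V \<union> t) b"

lemma weight_append: "weight h V (a @ b) = weight h V a * weight h (V \<union> servers a) b"
  by (induction a arbitrary: V) (auto simp: Un_assoc)

lemma weight_snoc: "weight h V (a @ [t]) = weight h V a * (h t / of_nat (card (V \<union> servers a \<union> t)))"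
  by (simp add: weight_append)

lemma weight_covered:
  "\<forall>t\<in>set a. t \<subseteq> V \<Longrightarrow> weight h V a = prod_list (map (\<lambda>t. h t / of_nat (card V)) a)"
proof (induction a)
  case (Cons t a)
  then have "V \<union> t = V" by auto
  with Cons show ?case by simp
qed simp

lemma of_real_weight:
  "(of_real (weight h V b) :: 'a::real_normed_field) = weight (\<lambda>t. of_real (h t)) V b"
  by (induction b arbitrary: V) (simp_all add: of_real_mult of_real_divide)

lemma weight_const_mult: "weight (\<lambda>_. c * z) V b = weight (\<lambda>_. c) V b * z ^ length b"
  by (induction b arbitrary: V) (auto simp: algebra_simps)

lemma weight_marked_const:
  "weight (\<lambda>t. c * (if t = u then z else 1)) V b = weight (\<lambda>_. c) V b * z ^ count_list b u"
  by (induction b arbitrary: V) (auto simp: algebra_simps)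

lemma weight_pos:
  fixes c :: real
  assumes "c > 0" "finite V" "\<forall>t\<in>set b. finite t \<and> t \<noteq> {}"
  shows "weight (\<lambda>_. c) V b > 0"
  using assms(2,3)
proof (induction b arbitrary: V)
  case (Cons t b)
  then have "card (V \<union> t) > 0" by (auto simp: card_gt_0_iff)
  with Cons assms(1) show ?case by simp
qed simp

text \<open>For \<open>V = {}\<close> this is the partial balance of the product form below; the general busy set V
  is needed for the induction.\<close>

lemma sum_weight_ins_at:
  fixes c :: real
  assumes "finite V" "finite t" "t \<noteq> {}" "\<forall>a\<in>set x. finite a \<and> a \<noteq> {}"
  shows "(\<Sum>j\<le>length x. weight (\<lambda>_. c) V (ins_at j t x) * real (card (t - (V \<union> servers (take j x)))))
       = c * (weight (\<lambda>_. c) V x - real (card V) / real (card (V \<union> t)) * weight (\<lambda>_. c) (V \<union> t) x)"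
  using assms(1,4)
proof (induction x arbitrary: V)
  case Nil
  have "card (V \<union> t) > 0" using Nil.prems assms(2,3) by (auto simp: card_gt_0_iff)
  moreover have "real (card (t - V)) = real (card (V \<union> t)) - real (card V)"
    using card_Un_Diff[OF Nil.prems(1) assms(2)] by simp
  ultimately show ?case by (simp add: field_simps) (metis distrib_left)
next
  case (Cons a x)
  let ?w = "weight (\<lambda>_. c)"
  have fa: "finite a" "a \<noteq> {}" "\<forall>b\<in>set x. finite b \<and> b \<noteq> {}" using Cons.prems by auto
  have P: "card (V \<union> a) > 0" using Cons.prems(1) fa by (auto simp: card_gt_0_iff)
  have R: "card (V \<union> t) > 0" using Cons.prems(1) assms(2,3) by (auto simp: card_gt_0_iff)
  have "real (card (t - V)) = real (card (V \<union> t)) - real (card V)"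
    using card_Un_Diff[OF Cons.prems(1) assms(2)] by simp
  moreover have "?w V (ins_at 0 t (a # x)) = c / real (card (V \<union> t)) * ?w (V \<union> t) (a # x)"
    by simp
  ultimately have head: "?w V (ins_at 0 t (a # x)) * real (card (t - (V \<union> servers (take 0 (a # x)))))
      = c * ?w (V \<union> t) (a # x) - c * real (card V) / real (card (V \<union> t)) * ?w (V \<union> t) (a # x)"
    using R by (simp add: field_simps del: weight.simps) (metis distrib_left distrib_right)
  have "(\<Sum>j\<le>length x. ?w V (ins_at (Suc j) t (a # x)) *
            real (card (t - (V \<union> servers (take (Suc j) (a # x))))))
      = c / real (card (V \<union> a)) * (\<Sum>j\<le>length x. ?w (V \<union> a) (ins_at j t x) *
            real (card (t - ((V \<union> a) \<union> servers (take j x)))))"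
    unfolding sum_distrib_left by (intro sum.cong) (auto simp: Un_assoc)
  also have "\<dots> = c * ?w V (a # x) - c * ?w (V \<union> t) (a # x)"
  proof -
    have "finite (V \<union> a)" using Cons.prems(1) fa by simp
    from Cons.IH[OF this fa(3)] have IH: "(\<Sum>j\<le>length x. ?w (V \<union> a) (ins_at j t x) *
            real (card (t - ((V \<union> a) \<union> servers (take j x)))))
        = c * (?w (V \<union> a) x - real (card (V \<union> a)) / real (card (V \<union> a \<union> t)) * ?w (V \<union> a \<union> t) x)" .
    show ?thesis
      unfolding IH using P by (simp add: field_simps Un_ac)
  qed
  finally show ?case
    unfolding length_Cons sum.atMost_Suc_shift head by (simp add: algebra_simps)
qed

section \<open>The product-form stationary distribution\<close>

locale coc =
  fixes K d :: nat and lam mu :: real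
  assumes d_pos: "1 \<le> d" and d_le_K: "d \<le> K" and lam_pos: "lam > 0" and mu_pos: "mu > 0"
begin

abbreviation "Ty \<equiv> Types K d"
abbreviation "St \<equiv> States K d"
abbreviation "ntypes \<equiv> K choose d"

definition load :: real where
  "load = lam / (real ntypes * mu)"

text \<open>The stationary distribution relative to the empty state:
  \<open>product_form x = \<Prod>\<^sub>k (lam / ntypes) / (mu * F\<^sub>k(x))\<close>.\<close>

definition product_form :: "nat set list \<Rightarrow> real" where
  "product_form x = weight (\<lambda>_. load) {} x"

lemma ntypes_pos: "ntypes > 0"
  using d_le_K by simp

lemma card_Ty: "card Ty = ntypes"
  by (rule card_Types)

lemma load_pos: "load > 0"
  unfolding load_def using ntypes_pos lam_pos mu_pos by simp

lemma load_mu: "load * mu = lam / real ntypes"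
  unfolding load_def using mu_pos by simp

lemma St_iff: "x \<in> St \<longleftrightarrow> set x \<subseteq> Ty"
  by (simp add: States_def)

lemma Ty_finite_nonempty: "t \<in> Ty \<Longrightarrow> finite t \<and> t \<noteq> {}"
  using Types_finite Types_nonempty[OF d_pos] by blast

lemma card_servers_pos: "set x \<subseteq> Ty \<Longrightarrow> x \<noteq> [] \<Longrightarrow> card (servers x) > 0"
  using finite_servers[of x K d] Ty_finite_nonempty
  by (cases x) (auto simp: card_gt_0_iff)

lemma product_form_pos: "set x \<subseteq> Ty \<Longrightarrow> product_form x > 0"
  unfolding product_form_def using Ty_finite_nonempty by (intro weight_pos load_pos) auto

lemma product_form_nonneg: "x \<in> St \<Longrightarrow> product_form x \<ge> 0"
  using product_form_pos by (simp add: St_iff less_imp_le)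

lemma product_form_snoc:
  "product_form (x @ [t]) = product_form x * (load / real (card (servers x \<union> t)))"
  unfolding product_form_def by (simp add: weight_snoc)

lemma sum_svc_rate_St:
  "set x \<subseteq> Ty \<Longrightarrow> (\<Sum>j<length x. svc_rate mu x j) = mu * real (card (servers x))"
  using Ty_finite_nonempty by (intro sum_svc_rate) auto

text \<open>Partial balance: the flow out of the states obtained by inserting a type-t customer into x
  through that customer's departure equals the flow of type-t arrivals into x.\<close>

lemma product_form_departure_balance:
  assumes "set x \<subseteq> Ty" "t \<in> Ty"
  shows "(\<Sum>j\<le>length x. product_form (ins_at j t x) * svc_rate mu (ins_at j t x) j)
       = product_form x * lam / real ntypes"
proof -
  have "(\<Sum>j\<le>length x. product_form (ins_at j t x) * svc_rate mu (ins_at j t x) j)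
      = mu * (\<Sum>j\<le>length x. weight (\<lambda>_. load) {} (ins_at j t x) *
                              real (card (t - ({} \<union> servers (take j x)))))"
    unfolding sum_distrib_left product_form_def by (intro sum.cong) (auto simp: svc_rate_ins_at)
  also have "\<dots> = mu * (load * product_form x)"
  proof -
    have "\<forall>a\<in>set x. finite a \<and> a \<noteq> {}" "finite t" "t \<noteq> {}"
      using assms Ty_finite_nonempty by auto
    from sum_weight_ins_at[OF _ this(2,3,1), of "{}" load] show ?thesis
      by (simp add: product_form_def)
  qed
  also have "\<dots> = (load * mu) * product_form x"
    by (simp add: ac_simps)
  finally show ?thesis
    using load_mu by simp
qed

text \<open>Partial balance for the last customer: its departure rate from x is balanced by the
  arrival that created x.\<close>

lemma product_form_arrival_balance:
  assumes "set x \<subseteq> Ty" "x \<noteq> []"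
  shows "product_form x * (mu * real (card (servers x))) = product_form (butlast x) * lam / real ntypes"
proof -
  obtain y t where x: "x = y @ [t]" using assms(2) by (cases x rule: rev_cases) auto
  have "card (servers x) > 0" using card_servers_pos[OF assms] .
  then have "product_form x * (mu * real (card (servers x))) = load * mu * product_form y"
    by (simp add: x product_form_snoc field_simps)
  then show ?thesis
    using load_mu by (simp add: x)
qed

definition departure_rate :: "nat set list \<Rightarrow> real" where
  "departure_rate x = (\<Sum>j<length x. svc_rate mu x j)"

definition arrival_inflow :: "(nat set list \<Rightarrow> real) \<Rightarrow> nat set list \<Rightarrow> real" where
  "arrival_inflow f x = (if x = [] then 0 else f (butlast x) * lam / real ntypes)"

definition departure_inflow :: "(nat set list \<Rightarrow> real) \<Rightarrow> nat set list \<Rightarrow> real" where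
  "departure_inflow f x = (\<Sum>j\<le>length x. \<Sum>T\<in>Ty. f (ins_at j T x) * svc_rate mu (ins_at j T x) j)"

definition imbalance :: "(nat set list \<Rightarrow> real) \<Rightarrow> nat set list \<Rightarrow> real" where
  "imbalance f x = f x * (lam + departure_rate x) - arrival_inflow f x - departure_inflow f x"

definition balanced :: "(nat set list \<Rightarrow> real) \<Rightarrow> bool" where
  "balanced f \<longleftrightarrow> (\<forall>x\<in>St. imbalance f x = 0)"

lemma stationary_balanced: "stationary_dist K d lam mu p \<Longrightarrow> balanced p"
  unfolding stationary_dist_def balanced_def imbalance_def departure_rate_def
    arrival_inflow_def departure_inflow_def card_Types
  by auto

lemma balanced_product_form: "balanced product_form"
  unfolding balanced_def
proof
  fix x assume "x \<in> St"
  then have x: "set x \<subseteq> Ty" by (simp add: St_iff)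
  have "departure_inflow product_form x
      = (\<Sum>T\<in>Ty. \<Sum>j\<le>length x. product_form (ins_at j T x) * svc_rate mu (ins_at j T x) j)"
    unfolding departure_inflow_def by (rule sum.swap)
  also have "\<dots> = product_form x * lam"
    using product_form_departure_balance[OF x] card_Ty ntypes_pos by simp
  finally have "departure_inflow product_form x = product_form x * lam" .
  moreover have "arrival_inflow product_form x = product_form x * departure_rate x"
    using product_form_arrival_balance[OF x] sum_svc_rate_St[OF x]
    by (cases "x = []") (simp_all add: arrival_inflow_def departure_rate_def)
  ultimately show "imbalance product_form x = 0"
    by (simp add: imbalance_def algebra_simps)
qed

lemma imbalance_linear:
  "imbalance (\<lambda>x. a * f x - b * g x) x = a * imbalance f x - b * imbalance g x"
  unfolding imbalance_def arrival_inflow_def departure_inflow_def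
  by (simp add: algebra_simps sum_subtractf sum_distrib_left diff_divide_distrib)

lemma ins_at_St: "x \<in> St \<Longrightarrow> T \<in> Ty \<Longrightarrow> ins_at j T x \<in> St"
  by (simp add: St_iff)

lemma butlast_St: "x \<in> St \<Longrightarrow> butlast x \<in> St"
  by (auto simp: St_iff dest: in_set_butlastD)

lemma departure_rate_nonneg: "departure_rate x \<ge> 0"
  unfolding departure_rate_def using mu_pos by (intro sum_nonneg svc_rate_nonneg) simp

lemma svc_rate_le: "y \<in> St \<Longrightarrow> j < length y \<Longrightarrow> svc_rate mu y j \<le> mu * real K"
proof -
  assume "y \<in> St" "j < length y"
  then have yj: "y ! j \<in> Ty" by (auto simp: St_iff)
  have "card (y ! j - \<Union> (set (take j y))) \<le> card (y ! j)"
    using Types_finite[OF yj] by (intro card_mono) auto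
  also have "\<dots> \<le> K" using Types_card[OF yj] d_le_K by simp
  finally show ?thesis
    unfolding svc_rate_def using mu_pos by simp
qed

lemma departure_rate_le: "y \<in> St \<Longrightarrow> departure_rate y \<le> mu * real K"
proof -
  assume y: "y \<in> St"
  have "card (servers y) \<le> card {..<K}"
    using servers_subset[of y K d] y by (intro card_mono) (auto simp: St_iff)
  then show ?thesis
    unfolding departure_rate_def using sum_svc_rate_St[of y] y mu_pos by (simp add: St_iff)
qed

lemma arrival_inflow_mono:
  "x \<in> St \<Longrightarrow> \<forall>y\<in>St. f y \<le> g y \<Longrightarrow> arrival_inflow f x \<le> arrival_inflow g x"
  unfolding arrival_inflow_def using butlast_St lam_pos by (auto simp: divide_right_mono)

lemma departure_inflow_mono:
  "x \<in> St \<Longrightarrow> \<forall>y\<in>St. f y \<le> g y \<Longrightarrow> departure_inflow f x \<le> departure_inflow g x"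
  unfolding departure_inflow_def using ins_at_St svc_rate_nonneg mu_pos
  by (intro sum_mono mult_right_mono) auto

lemma departure_inflow_ge_head:
  assumes f: "\<forall>y\<in>St. f y \<ge> 0" and x: "x \<in> St" and T: "T \<in> Ty"
  shows "f (T # x) * (mu * real d) \<le> departure_inflow f x"
proof -
  have nonneg: "0 \<le> f (ins_at j T' x) * svc_rate mu (ins_at j T' x) j" if "T' \<in> Ty" for j T'
    using f ins_at_St[OF x that] svc_rate_nonneg mu_pos by simp
  have "f (ins_at 0 T x) * svc_rate mu (ins_at 0 T x) 0
      \<le> (\<Sum>T'\<in>Ty. f (ins_at 0 T' x) * svc_rate mu (ins_at 0 T' x) 0)"
    using nonneg[of _ 0] by (intro member_le_sum) (auto simp: T finite_Types)
  moreover have "svc_rate mu (T # x) 0 = mu * real d"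
    using Types_card[OF T] by (simp add: svc_rate_def)
  ultimately have "f (T # x) * (mu * real d)
      \<le> (\<Sum>T'\<in>Ty. f (ins_at 0 T' x) * svc_rate mu (ins_at 0 T' x) 0)"
    by simp
  also have "\<dots> \<le> departure_inflow f x"
    unfolding departure_inflow_def using nonneg
    by (intro member_le_sum[of 0 "{..length x}"] sum_nonneg) auto
  finally show ?thesis .
qed

text \<open>Induction on the length: x receives no inflow, while the departure of the head of \<open>T # x\<close>
  feeds x at rate \<open>mu d\<close>.\<close>

lemma balanced_nonneg_vanishes:
  assumes f: "\<forall>y\<in>St. f y \<ge> 0" and bal: "balanced f" and f0: "f [] = 0"
  shows "\<forall>x\<in>St. f x = 0"
proof
  fix x assume "x \<in> St"
  then show "f x = 0"
  proof (induction x)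
    case (Cons T x)
    have x: "x \<in> St" and T: "T \<in> Ty" using Cons.prems by (auto simp: St_iff)
    have "imbalance f x = 0"
      using bal x by (simp add: balanced_def)
    then have "arrival_inflow f x + departure_inflow f x = 0"
      using Cons.IH[OF x] by (simp add: imbalance_def)
    moreover have "arrival_inflow f x \<ge> 0"
      unfolding arrival_inflow_def using f butlast_St[OF x] lam_pos by simp
    ultimately have "f (T # x) * (mu * real d) \<le> 0"
      using departure_inflow_ge_head[OF f x T] by linarith
    moreover have "mu * real d > 0" using mu_pos d_pos by simp
    ultimately show ?case
      using f Cons.prems by (meson mult_le_0_iff not_le order_antisym)
  qed (use f0 in simp)
qed

definition level :: "nat \<Rightarrow> nat set list set" where
  "level n = {x. set x \<subseteq> Ty \<and> length x = n}"

lemma finite_level: "finite (level n)"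
  unfolding level_def using finite_lists_length_eq[OF finite_Types] .

lemma level_St: "x \<in> level n \<Longrightarrow> x \<in> St"
  by (simp add: level_def St_iff)

lemma level_0: "level 0 = {[]}"
  by (auto simp: level_def)

lemma sum_level_Suc_butlast:
  "(\<Sum>x\<in>level (Suc n). g (butlast x)) = real ntypes * (\<Sum>y\<in>level n. g y)"
proof -
  have "(\<Sum>x\<in>level (Suc n). g (butlast x)) = (\<Sum>(y, T)\<in>level n \<times> Ty. g y)"
  proof (rule sum.reindex_bij_witness[where i = "\<lambda>(y, T). y @ [T]" and j = "\<lambda>x. (butlast x, last x)"])
    fix x assume x: "x \<in> level (Suc n)"
    then have "x \<noteq> []" by (auto simp: level_def)
    with x show "(case (butlast x, last x) of (y, T) \<Rightarrow> y @ [T]) = x"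
      "(butlast x, last x) \<in> level n \<times> Ty"
      by (auto simp: level_def dest: in_set_butlastD)
  qed (auto simp: level_def)
  also have "\<dots> = real ntypes * (\<Sum>y\<in>level n. g y)"
    by (simp add: sum.cartesian_product[symmetric] card_Ty sum_distrib_left)
  finally show ?thesis .
qed

lemma sum_level_arrival_inflow:
  "(\<Sum>x\<in>level n. arrival_inflow f x) = (if n = 0 then 0 else lam * (\<Sum>y\<in>level (n - 1). f y))"
proof (cases n)
  case (Suc m)
  have "(\<Sum>x\<in>level (Suc m). arrival_inflow f x) = (\<Sum>x\<in>level (Suc m). f (butlast x) * lam / real ntypes)"
    unfolding arrival_inflow_def by (intro sum.cong) (auto simp: level_def)
  also have "\<dots> = (\<Sum>x\<in>level (Suc m). f (butlast x)) * lam / real ntypes"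
    by (simp add: sum_distrib_right sum_divide_distrib)
  also have "\<dots> = lam * (\<Sum>y\<in>level m. f y)"
    using ntypes_pos by (simp add: sum_level_Suc_butlast)
  finally show ?thesis using Suc by simp
qed (simp add: level_0 arrival_inflow_def)

text \<open>Inserting a customer at position j and deleting the j-th customer are inverse bijections
  between \<open>level n \<times> {..n} \<times> Ty\<close> and the pairs (y, j) with \<open>y \<in> level (Suc n)\<close>, \<open>j \<le> n\<close>.\<close>

lemma sum_level_departure_inflow:
  "(\<Sum>x\<in>level n. departure_inflow f x) = (\<Sum>y\<in>level (Suc n). f y * departure_rate y)"
proof -
  have "(\<Sum>x\<in>level n. departure_inflow f x)
      = (\<Sum>(x, j, T)\<in>level n \<times> {..n} \<times> Ty. f (ins_at j T x) * svc_rate mu (ins_at j T x) j)"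
    unfolding departure_inflow_def sum.cartesian_product[symmetric]
    by (intro sum.cong) (auto simp: level_def)
  also have "\<dots> = (\<Sum>(y, j)\<in>Sigma (level (Suc n)) (\<lambda>_. {..<Suc n}). f y * svc_rate mu y j)"
  proof (rule sum.reindex_bij_witness[where i = "\<lambda>(y, j). (del_at j y, j, y ! j)"
          and j = "\<lambda>(x, j, T). (ins_at j T x, j)"])
    fix b assume "b \<in> Sigma (level (Suc n)) (\<lambda>_. {..<Suc n})"
    then obtain y j where b: "b = (y, j)" "set y \<subseteq> Ty" "j < length y" "length y = Suc n"
      by (auto simp: level_def)
    then show "(case case b of (y, j) \<Rightarrow> (del_at j y, j, y ! j) of (x, j, T) \<Rightarrow> (ins_at j T x, j)) = b"
      by (simp add: ins_at_del_at)
    show "(case b of (y, j) \<Rightarrow> (del_at j y, j, y ! j)) \<in> level n \<times> {..n} \<times> Ty"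
      using b set_del_at_subset[of j y] by (auto simp: level_def)
  qed (auto simp: level_def)
  also have "\<dots> = (\<Sum>y\<in>level (Suc n). f y * departure_rate y)"
    unfolding departure_rate_def sum_distrib_left
    by (subst sum.Sigma[symmetric]) (auto simp: finite_level[unfolded level_def] level_def intro!: sum.cong)
  finally show ?thesis .
qed

lemma sum_levels_imbalance:
  "(\<Sum>n\<le>m. \<Sum>x\<in>level n. imbalance f x)
     = lam * (\<Sum>x\<in>level m. f x) - (\<Sum>y\<in>level (Suc m). f y * departure_rate y)"
proof (induction m)
  case 0
  show ?case
    using sum_level_departure_inflow[where n = 0 and f = f]
    by (simp add: level_0 imbalance_def arrival_inflow_def departure_rate_def)
next
  case (Suc m)
  have "(\<Sum>x\<in>level (Suc m). imbalance f x)
      = lam * (\<Sum>x\<in>level (Suc m). f x) + (\<Sum>x\<in>level (Suc m). f x * departure_rate x)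
        - lam * (\<Sum>y\<in>level m. f y) - (\<Sum>y\<in>level (Suc (Suc m)). f y * departure_rate y)"
    unfolding imbalance_def sum_subtractf
    by (simp add: sum_level_arrival_inflow sum_level_departure_inflow algebra_simps sum.distrib
        sum_distrib_left)
  with Suc show ?case by simp
qed

lemma level_mass_tendsto_zero:
  fixes p :: "nat set list \<Rightarrow> real"
  assumes "(p has_sum 1) St" "\<forall>x\<in>St. p x \<ge> 0"
  shows "(\<lambda>m. \<Sum>x\<in>level m. p x) \<longlonglongrightarrow> 0"
proof -
  have "(\<Sum>m<N. \<Sum>x\<in>level m. p x) \<le> 1" for N
  proof -
    have "(\<Sum>m<N. \<Sum>x\<in>level m. p x) = sum p (\<Union>m<N. level m)"
      by (rule sum.UNION_disjoint[symmetric]) (auto simp: finite_level[unfolded level_def] level_def)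
    also have "\<dots> \<le> 1"
      using assms by (intro finite_sum_le_has_sum) (auto simp: finite_level level_St)
    finally show ?thesis .
  qed
  moreover have "0 \<le> (\<Sum>x\<in>level m. p x)" for m
    using assms(2) level_St by (intro sum_nonneg) auto
  ultimately show ?thesis
    by (intro summable_LIMSEQ_zero summableI_nonneg_bounded)
qed

lemma imbalance_min_nonneg:
  assumes "balanced p" "balanced q" "x \<in> St"
  shows "imbalance (\<lambda>x. min (p x) (q x)) x \<ge> 0"
proof -
  let ?m = "\<lambda>x. min (p x) (q x)"
  have le: "arrival_inflow ?m x + departure_inflow ?m x \<le> f x * (lam + departure_rate x)"
    if "f = p \<or> f = q" for f
  proof -
    have "arrival_inflow ?m x + departure_inflow ?m x \<le> arrival_inflow f x + departure_inflow f x"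
      using that arrival_inflow_mono[OF assms(3)] departure_inflow_mono[OF assms(3)]
      by (auto intro: add_mono)
    moreover have "imbalance f x = 0"
      using that assms by (auto simp: balanced_def)
    ultimately show ?thesis by (simp add: imbalance_def)
  qed
  have "?m x * (lam + departure_rate x)
      = min (p x * (lam + departure_rate x)) (q x * (lam + departure_rate x))"
    using lam_pos departure_rate_nonneg[of x] by (simp add: min_mult_distrib_right)
  then show ?thesis
    using le[of p] le[of q] by (simp add: imbalance_def)
qed

text \<open>A nonnegative function dominated by a probability distribution that is a supersolution
  of the balance equations is a solution: by telescoping over levels, the total imbalance of the
  first m levels is bounded by lam times the mass of level m, which tends to zero.\<close>

lemma balanced_if_imbalance_nonneg:
  assumes f: "\<forall>x\<in>St. 0 \<le> f x \<and> f x \<le> p x" and e: "\<forall>x\<in>St. imbalance f x \<ge> 0"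
    and p: "(p has_sum 1) St"
  shows "balanced f"
proof -
  have level_zero: "(\<Sum>x\<in>level n. imbalance f x) = 0" for n
  proof -
    have "(\<Sum>x\<in>level n. imbalance f x) \<le> lam * (\<Sum>x\<in>level m. p x)" if "m \<ge> n" for m
    proof -
      have "(\<Sum>x\<in>level n. imbalance f x) \<le> (\<Sum>n'\<le>m. \<Sum>x\<in>level n'. imbalance f x)"
        using that e level_St by (intro member_le_sum sum_nonneg) auto
      also have "\<dots> \<le> lam * (\<Sum>x\<in>level m. f x)"
        unfolding sum_levels_imbalance using f departure_rate_nonneg level_St
        by (auto intro!: sum_nonneg)
      also have "\<dots> \<le> lam * (\<Sum>x\<in>level m. p x)"
        using lam_pos f level_St by (auto intro!: mult_left_mono sum_mono)
      finally show ?thesis .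
    qed
    moreover have "(\<lambda>m. lam * (\<Sum>x\<in>level m. p x)) \<longlonglongrightarrow> lam * 0"
      using f by (intro tendsto_mult tendsto_const level_mass_tendsto_zero[OF p]) auto
    ultimately have "(\<Sum>x\<in>level n. imbalance f x) \<le> 0"
      by (intro LIMSEQ_le_const) auto
    moreover have "(\<Sum>x\<in>level n. imbalance f x) \<ge> 0"
      using e level_St by (auto intro!: sum_nonneg)
    ultimately show ?thesis by simp
  qed
  show ?thesis
    unfolding balanced_def
  proof
    fix x assume "x \<in> St"
    then have "x \<in> level (length x)" by (simp add: level_def St_iff)
    then show "imbalance f x = 0"
      using level_zero[of "length x"] e level_St
      by (subst (asm) sum_nonneg_eq_0_iff) (auto simp: finite_level)
  qed
qed

text \<open>The minimum m of p and of the product-form solution with the same value at the empty state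
  is balanced; then \<open>p - m\<close> and the product form minus m are nonnegative solutions vanishing at
  the empty state.\<close>

theorem stationary_product_form:
  assumes "stationary_dist K d lam mu p"
  shows "\<forall>x\<in>St. p x = p [] * product_form x"
proof -
  define q where "q = (\<lambda>x. p [] * product_form x)"
  define m where "m = (\<lambda>x. min (p x) (q x))"
  have p: "(p has_sum 1) St" "\<forall>x\<in>St. p x \<ge> 0" "balanced p"
    using assms stationary_balanced by (auto simp: stationary_dist_def)
  have "balanced q"
    using balanced_product_form imbalance_linear[of "p []" product_form 0 product_form]
    by (simp add: balanced_def q_def)
  have "p [] \<ge> 0" using p(2) by (simp add: St_iff)
  then have q: "\<forall>x\<in>St. q x \<ge> 0"
    by (simp add: q_def product_form_nonneg)
  have "balanced m"
    using p q \<open>balanced q\<close> imbalance_min_nonneg unfolding m_def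
    by (intro balanced_if_imbalance_nonneg[OF _ _ p(1)]) auto
  have bal_diff: "balanced (\<lambda>x. f x - m x)" if "balanced f" for f
    using that \<open>balanced m\<close> imbalance_linear[of 1 f 1 m] by (simp add: balanced_def)
  have "\<forall>x\<in>St. p x - m x = 0"
    by (rule balanced_nonneg_vanishes[OF _ bal_diff[OF p(3)]])
       (simp_all add: m_def q_def product_form_def)
  moreover have "\<forall>x\<in>St. q x - m x = 0"
    by (rule balanced_nonneg_vanishes[OF _ bal_diff[OF \<open>balanced q\<close>]])
       (simp_all add: m_def q_def product_form_def)
  ultimately show ?thesis
    unfolding q_def by auto
qed

lemma stationary_empty_pos:
  assumes "stationary_dist K d lam mu p"
  shows "p [] > 0"
proof -
  have "(p has_sum 1) St" "p [] \<ge> 0"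
    using assms by (auto simp: stationary_dist_def St_iff)
  moreover have "p [] \<noteq> 0"
  proof
    assume "p [] = 0"
    then have "\<forall>x\<in>St. p x = 0" using stationary_product_form[OF assms] by simp
    then have "(p has_sum 0) St" by (simp add: has_sum_0)
    with \<open>(p has_sum 1) St\<close> show False using has_sum_unique by fastforce
  qed
  ultimately show ?thesis by simp
qed

lemma has_sum_product_form:
  assumes "stationary_dist K d lam mu p"
  shows "(product_form has_sum (1 / p [])) St"
proof -
  have "((\<lambda>x. p [] * product_form x) has_sum 1) St"
    using assms stationary_product_form[OF assms]
    by (subst has_sum_cong[where g = p]) (auto simp: stationary_dist_def)
  from has_sum_cmult_right[OF this, of "1 / p []"] show ?thesis
    using stationary_empty_pos[OF assms] by simp
qed

end

section \<open>Generating functions of product weights\<close>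

lemma has_sum_SigmaI_norm:
  fixes f :: "'a \<times> 'b \<Rightarrow> 'c::banach"
  assumes "\<And>x. x \<in> A \<Longrightarrow> ((\<lambda>y. f (x, y)) has_sum g x) (B x)"
    and "\<And>x. x \<in> A \<Longrightarrow> ((\<lambda>y. norm (f (x, y))) has_sum gn x) (B x)"
    and "(g has_sum S) A" and "gn summable_on A"
  shows "(f has_sum S) (Sigma A B)"
proof -
  have "(\<lambda>z. norm (f z)) summable_on Sigma A B"
    by (rule summable_on_SigmaI[where g = gn]) (use assms(2,4) in auto)
  then have "f summable_on Sigma A B" by (rule abs_summable_summable)
  then show ?thesis using has_sum_SigmaI[where f = f and g = g and A = A and B = B] assms(1,3) by blast
qed

lemma has_sum_mult_Times:
  fixes f :: "'a \<Rightarrow> complex" and g :: "'b \<Rightarrow> complex"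
  assumes f: "(f has_sum a) X" and g: "(g has_sum b) Y"
  shows "((\<lambda>(x, y). f x * g y) has_sum (a * b)) (X \<times> Y)"
proof -
  have fn: "(\<lambda>x. norm (f x)) summable_on X" and gn: "(\<lambda>y. norm (g y)) summable_on Y"
    using f g summable_on_iff_abs_summable_on_complex by (auto simp: summable_on_def)
  define Gn where "Gn = infsum (\<lambda>y. norm (g y)) Y"
  have "((\<lambda>y. norm (g y)) has_sum Gn) Y" using gn unfolding Gn_def by simp
  then show ?thesis
    using f g fn
    by (intro has_sum_SigmaI_norm[where g = "\<lambda>x. f x * b" and gn = "\<lambda>x. norm (f x) * Gn"])
       (auto simp: norm_mult intro: has_sum_cmult_right has_sum_cmult_left summable_on_cmult_left)
qed

lemma has_sum_sum:
  fixes f :: "'i \<Rightarrow> 'a \<Rightarrow> 'b::topological_comm_monoid_add"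
  assumes "finite I" "\<And>i. i \<in> I \<Longrightarrow> (f i has_sum S i) A"
  shows "((\<lambda>x. \<Sum>i\<in>I. f i x) has_sum (\<Sum>i\<in>I. S i)) A"
  using assms by (induction I rule: finite_induct) (auto intro: has_sum_add)

lemma summable_on_norm_le:
  fixes f :: "'a \<Rightarrow> 'b::banach"
  assumes "g summable_on A" "\<And>x. x \<in> A \<Longrightarrow> norm (f x) \<le> g x"
  shows "f summable_on A"
  by (rule abs_summable_summable, rule Infinite_Sum.abs_summable_on_comparison_test'[OF assms])

lemma has_sum_geometric:
  fixes q :: "'a::{real_normed_field, banach}"
  assumes "norm q < 1"
  shows "((\<lambda>n. q ^ n) has_sum (1 / (1 - q))) UNIV"
proof (rule norm_summable_imp_has_sum)
  show "summable (\<lambda>n. norm (q ^ n))"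
    using summable_geometric[of "norm q"] assms by (simp add: norm_power)
  show "(\<lambda>n. q ^ n) sums (1 / (1 - q))"
    using geometric_sums[OF assms] by simp
qed

lemma norm_prod_list: "norm (prod_list xs) = prod_list (map norm xs)"
  for xs :: "'a::real_normed_div_algebra list"
  by (induction xs) (simp_all add: norm_mult)

lemma sum_prod_list_lists_length:
  fixes g :: "'a \<Rightarrow> 'b::comm_semiring_1"
  assumes "finite A"
  shows "(\<Sum>b\<in>{b. set b \<subseteq> A \<and> length b = n}. prod_list (map g b)) = (sum g A) ^ n"
proof (induction n)
  case 0
  have "{b. set b \<subseteq> A \<and> length b = 0} = {[]}" by auto
  then show ?case by simp
next
  case (Suc n)
  have "(\<Sum>b\<in>{b. set b \<subseteq> A \<and> length b = Suc n}. prod_list (map g b))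
      = (\<Sum>(xs, a)\<in>{b. set b \<subseteq> A \<and> length b = n} \<times> A. g a * prod_list (map g xs))"
    unfolding lists_length_Suc_eq by (subst sum.reindex[OF inj_split_Cons]) (simp add: case_prod_unfold)
  also have "\<dots> = sum g A ^ Suc n"
    using Suc by (simp add: sum.cartesian_product[symmetric] sum_distrib_left[symmetric]
        sum_distrib_right[symmetric] mult.commute)
  finally show ?case .
qed

lemma has_sum_prod_list_lists:
  fixes g :: "'a \<Rightarrow> complex"
  assumes A: "finite A" and lt: "(\<Sum>a\<in>A. norm (g a)) < 1"
  shows "((\<lambda>b. prod_list (map g b)) has_sum (1 / (1 - sum g A))) {b. set b \<subseteq> A}"
proof -
  define L where "L n = {b. set b \<subseteq> A \<and> length b = n}" for n
  have fin: "finite (L n)" for n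
    unfolding L_def using finite_lists_length_eq[OF A] .
  have "norm (sum g A) < 1"
    using norm_sum[of g A] lt by linarith
  moreover have "summable (\<lambda>n. (\<Sum>a\<in>A. norm (g a)) ^ n)"
    by (rule summable_geometric) (use lt in \<open>simp add: sum_nonneg\<close>)
  ultimately have "((\<lambda>z. prod_list (map g (snd z))) has_sum (1 / (1 - sum g A))) (Sigma UNIV L)"
    using fin sum_prod_list_lists_length[OF A, of g] sum_prod_list_lists_length[OF A, of "\<lambda>a. norm (g a)"]
    by (intro has_sum_SigmaI_norm[where g = "\<lambda>n. (sum g A) ^ n"
          and gn = "\<lambda>n. (\<Sum>a\<in>A. norm (g a)) ^ n"] has_sum_geometric)
       (auto simp: L_def norm_prod_list comp_def summable_on_UNIV_nonneg_real_iff sum_nonneg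
         intro!: has_sum_finiteI)
  moreover have "inj_on snd (Sigma UNIV L)" "snd ` Sigma UNIV L = {b. set b \<subseteq> A}"
    unfolding L_def by (auto intro: inj_onI) force
  ultimately show ?thesis
    using has_sum_reindex[of snd "Sigma UNIV L" "\<lambda>b. prod_list (map g b)"] by (simp add: comp_def)
qed

lemma has_sum_UNION_disjoint:
  fixes f :: "'a \<Rightarrow> 'b::topological_comm_monoid_add"
  assumes "finite I" "disjoint_family_on B I" "\<And>i. i \<in> I \<Longrightarrow> (f has_sum S i) (B i)"
  shows "(f has_sum (\<Sum>i\<in>I. S i)) (\<Union>i\<in>I. B i)"
  using assms
proof (induction I rule: finite_induct)
  case (insert i I)
  have "(B i) \<inter> (\<Union>j\<in>I. B j) = {}"
    using insert.hyps(2) insert.prems(1) by (fastforce simp: disjoint_family_on_def)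
  with insert show ?case
    by (auto intro!: has_sum_Un_disjoint simp: disjoint_family_on_def)
qed simp

definition fresh_lists :: "nat set set \<Rightarrow> nat set set \<Rightarrow> nat set list set" where
  "fresh_lists TT A = insert [] (\<Union>t\<in>TT - A. Cons t ` {b. set b \<subseteq> TT})"

lemma fresh_lists_empty: "fresh_lists TT {} = {b. set b \<subseteq> TT}"
  unfolding fresh_lists_def by (auto simp: image_iff) (metis list.exhaust set_subset_Cons subset_trans
      insert_subset list.simps(15))

lemma has_sum_weight_fresh_lists:
  fixes h :: "nat set \<Rightarrow> complex"
  assumes "finite TT"
    and "\<And>t. t \<in> TT - A \<Longrightarrow> (weight h (V \<union> t) has_sum S t) {b. set b \<subseteq> TT}"
  shows "(weight h V has_sum (1 + (\<Sum>t\<in>TT - A. h t / of_nat (card (V \<union> t)) * S t)))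
           (fresh_lists TT A)"
proof -
  have "(weight h V has_sum h t / of_nat (card (V \<union> t)) * S t) (Cons t ` {b. set b \<subseteq> TT})"
    if "t \<in> TT - A" for t
    using has_sum_cmult_right[OF assms(2)[OF that], of "h t / of_nat (card (V \<union> t))"]
    by (subst has_sum_reindex) (auto simp: comp_def)
  then have "(weight h V has_sum (\<Sum>t\<in>TT - A. h t / of_nat (card (V \<union> t)) * S t))
               (\<Union>t\<in>TT - A. Cons t ` {b. set b \<subseteq> TT})"
    using assms(1) by (intro has_sum_UNION_disjoint) (auto simp: disjoint_family_on_def)
  then have "(weight h V has_sum (weight h V [] + (\<Sum>t\<in>TT - A. h t / of_nat (card (V \<union> t)) * S t)))
               (insert [] (\<Union>t\<in>TT - A. Cons t ` {b. set b \<subseteq> TT}))"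
    by (intro has_sum_insert) auto
  then show ?thesis
    unfolding fresh_lists_def by simp
qed

text \<open>Every list over TT splits uniquely into its longest prefix of tokens from A and a fresh
  remainder.\<close>

lemma has_sum_lists_split_fresh_iff:
  assumes "A \<subseteq> TT"
  shows "(f has_sum S) {b. set b \<subseteq> TT}
     \<longleftrightarrow> ((\<lambda>(a, r). f (a @ r)) has_sum S) ({b. set b \<subseteq> A} \<times> fresh_lists TT A)"
proof (rule has_sum_reindex_bij_witness[where j = "\<lambda>y. (takeWhile (\<lambda>t. t \<in> A) y, dropWhile (\<lambda>t. t \<in> A) y)"
      and i = "\<lambda>(a, r). a @ r"])
  fix y assume y: "y \<in> {b. set b \<subseteq> TT}"
  have "dropWhile (\<lambda>t. t \<in> A) y \<in> fresh_lists TT A"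
  proof (cases "dropWhile (\<lambda>t. t \<in> A) y")
    case (Cons t r)
    have "set (dropWhile (\<lambda>t. t \<in> A) y) \<subseteq> TT" using y by (auto dest: set_dropWhileD)
    moreover have "t \<notin> A" using hd_dropWhile[of "\<lambda>t. t \<in> A" y] Cons by simp
    ultimately show ?thesis using Cons by (auto simp: fresh_lists_def)
  qed (simp add: fresh_lists_def)
  then show "(takeWhile (\<lambda>t. t \<in> A) y, dropWhile (\<lambda>t. t \<in> A) y) \<in> {b. set b \<subseteq> A} \<times> fresh_lists TT A"
    by (auto dest: set_takeWhileD)
next
  fix b assume "b \<in> {b. set b \<subseteq> A} \<times> fresh_lists TT A"
  then obtain a r where b: "b = (a, r)" "set a \<subseteq> A" "r \<in> fresh_lists TT A" by auto
  then have "takeWhile (\<lambda>t. t \<in> A) r = []" "dropWhile (\<lambda>t. t \<in> A) r = r" "\<forall>x\<in>set a. x \<in> A"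
    by (auto simp: fresh_lists_def)
  then show "(takeWhile (\<lambda>t. t \<in> A) (case b of (a, r) \<Rightarrow> a @ r),
              dropWhile (\<lambda>t. t \<in> A) (case b of (a, r) \<Rightarrow> a @ r)) = b"
    using b by (auto simp: takeWhile_append2 dropWhile_append2)
  show "(case b of (a, r) \<Rightarrow> a @ r) \<in> {b. set b \<subseteq> TT}"
    using b assms by (auto simp: fresh_lists_def)
qed auto

text \<open>The prefix from A does not enlarge the busy set V, so it contributes a geometric series.\<close>

lemma has_sum_weight_split_fresh:
  fixes h :: "nat set \<Rightarrow> complex"
  assumes TT: "finite TT" and AT: "A \<subseteq> TT" and AV: "\<forall>a\<in>A. a \<subseteq> V"
    and lt: "(\<Sum>a\<in>A. norm (h a / of_nat (card V))) < 1"
    and fresh: "(weight h V has_sum X) (fresh_lists TT A)"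
  shows "(weight h V has_sum (X / (1 - (\<Sum>a\<in>A. h a) / of_nat (card V)))) {b. set b \<subseteq> TT}"
proof -
  define geom where "geom = 1 / (1 - (\<Sum>a\<in>A. h a / of_nat (card V)))"
  have covered: "weight h V (a @ r) = weight h V a * weight h V r" if "set a \<subseteq> A" for a r
  proof -
    have "V \<union> servers a = V" using that AV by (auto simp: servers_def)
    then show ?thesis by (simp add: weight_append)
  qed
  have "((\<lambda>a. prod_list (map (\<lambda>t. h t / of_nat (card V)) a)) has_sum geom) {b. set b \<subseteq> A}"
    unfolding geom_def using TT AT lt by (intro has_sum_prod_list_lists) (auto intro: finite_subset)
  then have "(weight h V has_sum geom) {b. set b \<subseteq> A}"
  proof (rule has_sum_cong[THEN iffD1, rotated])
    fix a assume "a \<in> {b. set b \<subseteq> A}"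
    then show "prod_list (map (\<lambda>t. h t / of_nat (card V)) a) = weight h V a"
      using AV by (subst weight_covered) auto
  qed
  from has_sum_mult_Times[OF this fresh]
  have "((\<lambda>(a, r). weight h V (a @ r)) has_sum (geom * X)) ({b. set b \<subseteq> A} \<times> fresh_lists TT A)"
    by (rule has_sum_cong[THEN iffD1, rotated]) (auto simp: covered)
  then have "(weight h V has_sum (geom * X)) {b. set b \<subseteq> TT}"
    using has_sum_lists_split_fresh_iff[OF AT] by blast
  moreover have "geom * X = X / (1 - (\<Sum>a\<in>A. h a) / of_nat (card V))"
    by (simp add: geom_def sum_divide_distrib)
  ultimately show ?thesis by simp
qed

definition distinct_lists :: "'a set \<Rightarrow> 'a list set" where
  "distinct_lists B = {ts. distinct ts \<and> set ts \<subseteq> B}"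

lemma finite_distinct_lists: "finite B \<Longrightarrow> finite (distinct_lists B)"
  by (rule finite_subset[OF _ finite_lists_length_le[of B "card B"]])
     (auto simp: distinct_lists_def distinct_card[symmetric] intro: card_mono)

lemma sum_distinct_lists:
  assumes "finite B"
  shows "sum f (distinct_lists B) = f [] + (\<Sum>t\<in>B. \<Sum>ts\<in>distinct_lists (B - {t}). f (t # ts))"
proof -
  have "distinct_lists B = insert [] (\<Union>t\<in>B. Cons t ` distinct_lists (B - {t}))"
  proof (intro set_eqI iffI)
    fix ts assume "ts \<in> distinct_lists B"
    then show "ts \<in> insert [] (\<Union>t\<in>B. Cons t ` distinct_lists (B - {t}))"
      by (cases ts) (auto simp: distinct_lists_def)
  qed (auto simp: distinct_lists_def)
  moreover have "sum f (\<Union>t\<in>B. Cons t ` distinct_lists (B - {t}))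
      = (\<Sum>t\<in>B. \<Sum>ts\<in>distinct_lists (B - {t}). f (t # ts))"
    using assms by (subst sum.UNION_disjoint)
      (auto simp: finite_distinct_lists sum.reindex inj_on_def)
  moreover have "finite (\<Union>t\<in>B. Cons t ` distinct_lists (B - {t}))"
    using assms by (simp add: finite_distinct_lists)
  moreover have "[] \<notin> (\<Union>t\<in>B. Cons t ` distinct_lists (B - {t}))"
    by auto
  ultimately show ?thesis
    by simp
qed

text \<open>\<open>tuple_weight h {} ts\<close> is the summand of the token sums in the theorem: the j-th token contributes
  h over \<open>F\<^sub>j\<close> minus the total h of the first j tokens; for \<open>h = lam z / (C mu)\<close> this factor is
  \<open>lam z / (mu C F\<^sub>j - j lam z)\<close>.\<close>

fun tuple_weight :: "(nat set \<Rightarrow> complex) \<Rightarrow> nat set set \<Rightarrow> nat set list \<Rightarrow> complex" where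
  "tuple_weight h A [] = 1"
| "tuple_weight h A (t # ts) =
     h t / (of_nat (card (\<Union> (insert t A))) - (\<Sum>a\<in>insert t A. h a)) * tuple_weight h (insert t A) ts"

definition tuple_sum :: "(nat set \<Rightarrow> complex) \<Rightarrow> nat set set \<Rightarrow> nat set set \<Rightarrow> complex" where
  "tuple_sum h TT A = (\<Sum>ts\<in>distinct_lists (TT - A). tuple_weight h A ts)"

lemma tuple_sum_rec:
  assumes "finite TT"
  shows "tuple_sum h TT A = 1 + (\<Sum>t\<in>TT - A.
           h t / (of_nat (card (\<Union> (insert t A))) - (\<Sum>a\<in>insert t A. h a)) * tuple_sum h TT (insert t A))"
proof -
  have "TT - A - {t} = TT - insert t A" for t by auto
  then show ?thesis
    unfolding tuple_sum_def using assms
    by (subst sum_distinct_lists) (simp_all add: sum_distrib_left)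
qed

lemma tuple_weight_prod:
  "tuple_weight h A ts = (\<Prod>j=1..length ts. h (ts ! (j - 1)) /
      (of_nat (card (\<Union> (A \<union> set (take j ts)))) - (\<Sum>a\<in>A \<union> set (take j ts). h a)))"
proof (induction ts arbitrary: A)
  case (Cons t ts)
  have "insert t A \<union> set (take j ts) = A \<union> set (take (Suc j) (t # ts))" for j
    by auto
  with Cons show ?case
    by (simp add: prod.atLeast_Suc_atMost prod.atLeast_Suc_atMost_Suc_shift Un_ac del: prod.cl_ivl_Suc)
qed simp

lemma divide_mult_divide_one_minus:
  fixes x c P H :: "'a::field"
  assumes "c \<noteq> 0"
  shows "x / c * (P / (1 - H / c)) = x / (c - H) * P"
  using assms by (cases "c = H") (simp_all add: field_simps)

lemma norm_sum_divide_card_lt_1: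
  fixes h :: "nat set \<Rightarrow> complex"
  assumes "\<forall>t\<in>TT. finite t \<and> t \<noteq> {}" "A \<subseteq> TT" "finite (\<Union>A)"
    and "\<forall>A\<subseteq>TT. A \<noteq> {} \<longrightarrow> (\<Sum>a\<in>A. norm (h a)) < real (card (\<Union>A))"
  shows "(\<Sum>a\<in>A. norm (h a / of_nat (card (\<Union>A)))) < 1"
proof (cases "A = {}")
  case False
  then have "card (\<Union>A) > 0"
    using assms(1-3) by (auto simp: card_gt_0_iff)
  then show ?thesis
    using assms(2,4) False by (simp add: norm_divide sum_divide_distrib[symmetric] field_simps)
qed simp

text \<open>Induction on the number of tokens not yet held: after the longest prefix of held tokens, a
  fresh token t enlarges the set of held tokens to \<open>insert t A\<close>.\<close>

lemma has_sum_weight_lists_tuple_sum: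
  fixes h :: "nat set \<Rightarrow> complex"
  assumes TT: "finite TT" and elem: "\<forall>t\<in>TT. finite t \<and> t \<noteq> {}"
    and stable: "\<forall>A\<subseteq>TT. A \<noteq> {} \<longrightarrow> (\<Sum>a\<in>A. norm (h a)) < real (card (\<Union>A))"
  shows "A \<subseteq> TT \<Longrightarrow> (weight h (\<Union>A) has_sum
           (tuple_sum h TT A / (1 - (\<Sum>a\<in>A. h a) / of_nat (card (\<Union>A))))) {b. set b \<subseteq> TT}"
proof (induction "card (TT - A)" arbitrary: A rule: less_induct)
  case less
  define V where "V = \<Union>A"
  have fV: "finite V" unfolding V_def using less.prems elem TT by (auto intro: finite_subset)
  have "(weight h V has_sum (1 + (\<Sum>t\<in>TT - A. h t / of_nat (card (V \<union> t)) *
          (tuple_sum h TT (insert t A) / (1 - (\<Sum>a\<in>insert t A. h a) / of_nat (card (V \<union> t)))))))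
          (fresh_lists TT A)"
  proof (rule has_sum_weight_fresh_lists[OF TT])
    fix t assume t: "t \<in> TT - A"
    then have "card (TT - insert t A) < card (TT - A)"
      using TT by (intro psubset_card_mono) auto
    moreover have "\<Union>(insert t A) = V \<union> t" unfolding V_def by auto
    ultimately show "(weight h (V \<union> t) has_sum tuple_sum h TT (insert t A) /
          (1 - (\<Sum>a\<in>insert t A. h a) / of_nat (card (V \<union> t)))) {b. set b \<subseteq> TT}"
      using less.hyps[of "insert t A"] t less.prems by simp
  qed
  also have "1 + (\<Sum>t\<in>TT - A. h t / of_nat (card (V \<union> t)) *
          (tuple_sum h TT (insert t A) / (1 - (\<Sum>a\<in>insert t A. h a) / of_nat (card (V \<union> t)))))
      = tuple_sum h TT A"
  proof -
    have "h t / of_nat (card (V \<union> t)) *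
          (tuple_sum h TT (insert t A) / (1 - (\<Sum>a\<in>insert t A. h a) / of_nat (card (V \<union> t))))
        = h t / (of_nat (card (\<Union>(insert t A))) - (\<Sum>a\<in>insert t A. h a)) * tuple_sum h TT (insert t A)"
      if "t \<in> TT - A" for t
    proof -
      have U: "\<Union>(insert t A) = V \<union> t" and c: "of_nat (card (V \<union> t)) \<noteq> (0 :: complex)"
        using that elem fV by (auto simp: V_def card_gt_0_iff)
      show ?thesis
        unfolding U by (rule divide_mult_divide_one_minus[OF c])
    qed
    then show ?thesis
      unfolding tuple_sum_rec[OF TT, of h A]
      by (intro arg_cong[where f = "(+) 1"] sum.cong refl)
  qed
  finally have fresh: "(weight h V has_sum tuple_sum h TT A) (fresh_lists TT A)" .
  have "\<forall>a\<in>A. a \<subseteq> V" by (auto simp: V_def)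
  from has_sum_weight_split_fresh[OF TT less.prems this _ fresh] show ?case
    using norm_sum_divide_card_lt_1[OF elem less.prems _ stable] fV unfolding V_def by blast
qed

corollary has_sum_weight_lists:
  fixes h :: "nat set \<Rightarrow> complex"
  assumes "finite TT" "\<forall>t\<in>TT. finite t \<and> t \<noteq> {}"
    and "\<forall>A\<subseteq>TT. A \<noteq> {} \<longrightarrow> (\<Sum>a\<in>A. norm (h a)) < real (card (\<Union>A))"
  shows "(weight h {} has_sum tuple_sum h TT {}) {b. set b \<subseteq> TT}"
  using has_sum_weight_lists_tuple_sum[OF assms, of "{}"] by simp

lemma distinct_lists_Types: "distinct_lists (Types K d) = (\<Union>i\<in>{0..K choose d}. Tuples K d i)"
proof (intro set_eqI iffI)
  fix ts assume ts: "ts \<in> distinct_lists (Types K d)"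
  then have "length ts = card (set ts)" by (simp add: distinct_lists_def distinct_card)
  also have "\<dots> \<le> K choose d"
    using ts card_mono[OF finite_Types, of "set ts" K d] by (auto simp: distinct_lists_def card_Types)
  finally show "ts \<in> (\<Union>i\<in>{0..K choose d}. Tuples K d i)"
    using ts by (auto simp: distinct_lists_def Tuples_def)
qed (auto simp: distinct_lists_def Tuples_def)

lemma finite_Tuples: "finite (Tuples K d i)"
  by (rule finite_subset[OF _ finite_distinct_lists[OF finite_Types]])
     (auto simp: distinct_lists_def Tuples_def)

lemma sum_distinct_lists_Types:
  "(\<Sum>ts\<in>distinct_lists (Types K d). f ts) = (\<Sum>i=0..K choose d. \<Sum>ts\<in>Tuples K d i. f ts)"
  unfolding distinct_lists_Types
  by (rule sum.UNION_disjoint) (use finite_Tuples in \<open>auto simp: Tuples_def\<close>)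

lemma tuple_weight_F:
  "tuple_weight h {} ts = (\<Prod>j=1..length ts. h (ts ! (j - 1)) /
      (of_nat (F ts j) - (\<Sum>a\<in>set (take j ts). h a)))"
  by (simp add: tuple_weight_prod F_def)

lemma card_set_take_distinct: "distinct ts \<Longrightarrow> j \<le> length ts \<Longrightarrow> card (set (take j ts)) = j"
  by (simp add: distinct_card)

lemma prod_nth_distinct:
  fixes g :: "'a \<Rightarrow> 'b::comm_monoid_mult"
  assumes "distinct ts"
  shows "(\<Prod>j=1..length ts. g (ts ! (j - 1))) = (\<Prod>a\<in>set ts. g a)"
proof -
  have "(\<Prod>j=1..length ts. g (ts ! (j - 1))) = prod_list (map g ts)"
  proof (induction ts)
    case (Cons t ts)
    then show ?case
      by (simp add: prod.atLeast_Suc_atMost prod.atLeast_Suc_atMost_Suc_shift del: prod.cl_ivl_Suc)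
  qed simp
  with assms show ?thesis
    by (simp add: prod.distinct_set_conv_list)
qed

context coc
begin

lemma load_fraction_eq:
  fixes a b c :: complex
  shows "(of_real load * a) / (of_nat n - of_nat j * (of_real load * b) + of_real load * c)
       = (of_real lam * a) / (of_real (mu * real ntypes * real n) - of_nat j * of_real lam * b
                               + of_real lam * c)"
proof -
  let ?k = "of_real (mu * real ntypes) :: complex"
  have "lam = mu * real ntypes * load"
    using mu_pos ntypes_pos by (simp add: load_def)
  then have lam: "of_real lam = ?k * of_real load"
    by (metis of_real_mult)
  have "?k \<noteq> 0" using mu_pos ntypes_pos by simp
  then have "(of_real load * a) / (of_nat n - of_nat j * (of_real load * b) + of_real load * c)
      = (?k * (of_real load * a)) / (?k * (of_nat n - of_nat j * (of_real load * b) + of_real load * c))"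
    by simp
  also have "\<dots> = (of_real lam * a) / (of_real (mu * real ntypes * real n) - of_nat j * of_real lam * b
                               + of_real lam * c)"
    unfolding lam by (simp add: algebra_simps)
  finally show ?thesis .
qed

lemma product_form_append_covered:
  assumes "set a \<subseteq> Ty" "set b \<subseteq> set a"
  shows "product_form (a @ b) = product_form a * (load / real (card (servers a))) ^ length b"
proof -
  have "\<forall>t\<in>set b. t \<subseteq> {} \<union> servers a" using assms(2) by (auto simp: servers_def)
  then show ?thesis unfolding product_form_def weight_append
    by (simp add: weight_covered map_replicate_const)
qed

lemma sum_product_form_extensions_le:
  assumes st: "stationary_dist K d lam mu p" and a: "set a \<subseteq> Ty"
  shows "(\<Sum>n<N. product_form a * (real (card (set a)) * (load / real (card (servers a)))) ^ n) \<le> 1 / p []"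
proof -
  define B where "B = {b. set b \<subseteq> set a \<and> length b < N}"
  have "(\<Sum>n<N. product_form a * (real (card (set a)) * (load / real (card (servers a)))) ^ n)
      = (\<Sum>n<N. \<Sum>b\<in>{b. set b \<subseteq> set a \<and> length b = n}. product_form (a @ b))"
    using sum_prod_list_lists_length[of "set a" "\<lambda>_. load / real (card (servers a))"] a
    by (intro sum.cong refl) (simp add: product_form_append_covered sum_distrib_left map_replicate_const)
  also have "\<dots> = (\<Sum>b\<in>B. product_form (a @ b))"
    unfolding B_def by (subst sum.UNION_disjoint[symmetric])
      (auto intro: finite_lists_length_eq intro!: sum.cong)
  also have "\<dots> = (\<Sum>x\<in>(\<lambda>b. a @ b) ` B. product_form x)"
    by (simp add: sum.reindex inj_on_def)
  also have "\<dots> \<le> 1 / p []"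
  proof (rule finite_sum_le_has_sum[OF has_sum_product_form[OF st]])
    show "finite ((\<lambda>b. a @ b) ` B)"
      unfolding B_def by (intro finite_imageI finite_subset[OF _ finite_lists_length_le[of "set a" N]]) auto
  qed (use a product_form_nonneg in \<open>auto simp: B_def St_iff\<close>)
  finally show ?thesis .
qed

text \<open>The states extending a list a of all types in A by further customers of these types carry
  mass \<open>\<Sum>\<^sub>n product_form a * q\<^sup>n\<close> with \<open>q = |A| load / |\<Union>A|\<close>; as the total mass is finite,
  \<open>q < 1\<close>.\<close>

theorem stability_condition:
  assumes st: "stationary_dist K d lam mu p" and A: "A \<subseteq> Ty" "A \<noteq> {}"
  shows "real (card A) * load < real (card (\<Union>A))"
proof (rule ccontr)
  assume contra: "\<not> ?thesis"
  obtain a where a: "set a = A"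
    using finite_list[OF finite_subset[OF A(1) finite_Types]] by blast
  have aT: "set a \<subseteq> Ty" and "a \<noteq> []" using a A by auto
  then have "card (servers a) > 0" by (rule card_servers_pos)
  then have q: "real (card (set a)) * (load / real (card (servers a))) \<ge> 1"
    using contra a by (simp add: servers_def field_simps)
  have "product_form a * real N \<le> 1 / p []" for N
  proof -
    have "product_form a * real N = (\<Sum>n<N. product_form a * 1)"
      by simp
    also have "\<dots> \<le> (\<Sum>n<N. product_form a * (real (card (set a)) * (load / real (card (servers a)))) ^ n)"
      using product_form_pos[OF aT] q by (intro sum_mono mult_left_mono one_le_power) auto
    also have "\<dots> \<le> 1 / p []"
      by (rule sum_product_form_extensions_le[OF st aT])
    finally show ?thesis .
  qed
  moreover obtain N :: nat where "1 / p [] / product_form a < real N"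
    using reals_Archimedean2 by blast
  ultimately show False
    using product_form_pos[OF aT] stationary_empty_pos[OF st]
    by (smt (verit, ccfv_SIG) divide_less_eq mult.commute)
qed

lemma tuple_weight_const_load:
  assumes "ts \<in> Tuples K d i"
  shows "tuple_weight (\<lambda>_. of_real load * z) {} ts
       = (of_real lam * z) ^ i / (\<Prod>j=1..i. of_real (mu * real ntypes * real (F ts j)) - of_nat j * of_real lam * z)"
proof -
  have ts: "length ts = i" "distinct ts" using assms by (auto simp: Tuples_def)
  have "tuple_weight (\<lambda>_. of_real load * z) {} ts = (\<Prod>j=1..i. (of_real lam * z) /
          (of_real (mu * real ntypes * real (F ts j)) - of_nat j * of_real lam * z))"
    unfolding tuple_weight_F ts(1)
  proof (intro prod.cong refl)
    fix j assume "j \<in> {1..i}"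
    then have "card (set (take j ts)) = j"
      using card_set_take_distinct[OF ts(2), of j] ts(1) by simp
    then show "of_real load * z / (of_nat (F ts j) - (\<Sum>a\<in>set (take j ts). of_real load * z))
        = (of_real lam * z) / (of_real (mu * real ntypes * real (F ts j)) - of_nat j * of_real lam * z)"
      using load_fraction_eq[of z "F ts j" j z 0] by simp
  qed
  then show ?thesis
    by (simp add: prod_dividef)
qed

lemma stable_const_load:
  assumes st: "stationary_dist K d lam mu p" and z: "norm z < 1" and A: "A \<subseteq> Ty" "A \<noteq> {}"
  shows "(\<Sum>a\<in>A. norm (complex_of_real load * z)) < real (card (\<Union>A))"
proof -
  have "(\<Sum>a\<in>A. norm (complex_of_real load * z)) = real (card A) * (load * norm z)"
    using load_pos by (simp add: norm_mult)
  also have "\<dots> \<le> real (card A) * load"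
    using z load_pos by (intro mult_left_mono) (simp_all add: mult_left_le)
  also have "\<dots> < real (card (\<Union>A))"
    by (rule stability_condition[OF st A])
  finally show ?thesis .
qed

theorem gen_fun_M_closed_form:
  assumes st: "stationary_dist K d lam mu p" and z: "norm z < 1"
  shows "gen_fun_M K d p z =
           (\<Sum>i=0..(K choose d). \<Sum>ts\<in>Tuples K d i.
              (complex_of_real lam * z) ^ i * complex_of_real (p []) /
              (\<Prod>j=1..i. complex_of_real (mu * real (K choose d) * real (F ts j))
                          - of_nat j * complex_of_real lam * z))"
proof -
  define h where "h = (\<lambda>_::nat set. complex_of_real load * z)"
  have "(\<Sum>a\<in>A. norm (h a)) < real (card (\<Union>A))" if "A \<subseteq> Ty" "A \<noteq> {}" for A
    unfolding h_def by (rule stable_const_load[OF st z that])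
  then have lists: "(weight h {} has_sum tuple_sum h Ty {}) St"
    using has_sum_weight_lists[OF finite_Types] Ty_finite_nonempty by (simp add: States_def)
  have "gen_fun_M K d p z = infsum (\<lambda>x. complex_of_real (p []) * weight h {} x) St"
    unfolding gen_fun_M_def using stationary_product_form[OF st]
    by (intro infsum_cong) (simp add: h_def product_form_def weight_const_mult of_real_weight)
  also have "\<dots> = complex_of_real (p []) * tuple_sum h Ty {}"
    by (rule infsumI[OF has_sum_cmult_right[OF lists]])
  also have "\<dots> = (\<Sum>i=0..ntypes. \<Sum>ts\<in>Tuples K d i. complex_of_real (p []) * tuple_weight h {} ts)"
    unfolding tuple_sum_def Diff_empty sum_distinct_lists_Types sum_distrib_left ..
  also have "\<dots> = (\<Sum>i=0..ntypes. \<Sum>ts\<in>Tuples K d i.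
              (complex_of_real lam * z) ^ i * complex_of_real (p []) /
              (\<Prod>j=1..i. complex_of_real (mu * real ntypes * real (F ts j))
                          - of_nat j * complex_of_real lam * z))"
  proof (intro sum.cong refl)
    fix i ts assume "ts \<in> Tuples K d i"
    then show "complex_of_real (p []) * tuple_weight h {} ts =
        (complex_of_real lam * z) ^ i * complex_of_real (p []) /
        (\<Prod>j=1..i. complex_of_real (mu * real ntypes * real (F ts j)) - of_nat j * complex_of_real lam * z)"
      unfolding h_def tuple_weight_const_load[OF \<open>ts \<in> Tuples K d i\<close>] by (simp add: mult.commute)
  qed
  finally show ?thesis .
qed

end

section \<open>The sojourn time of a tagged customer\<close>

lemma tagged_lt_snoc:
  "tagged_lt mu s (x @ [T]) =
     (complex_of_real (svc_rate mu (x @ [T]) (length x))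
      + (\<Sum>j<length x. complex_of_real (svc_rate mu x j) * tagged_lt mu s (del_at j x @ [T])))
     / (complex_of_real (\<Sum>j<length (x @ [T]). svc_rate mu (x @ [T]) j) + s)"
proof -
  have "tagged_lt_aux mu s (length x) (del_at j (x @ [T])) = tagged_lt mu s (del_at j x @ [T])"
    if "j < length x" for j
  proof -
    have "length (del_at j x @ [T]) = length x" using that by simp
    then show ?thesis
      unfolding tagged_lt_def using that by (simp add: del_at_snoc)
  qed
  moreover have "tagged_lt mu s (x @ [T]) =
     (complex_of_real (svc_rate mu (x @ [T]) (length x))
      + (\<Sum>j<length x. complex_of_real (svc_rate mu (x @ [T]) j)
                        * tagged_lt_aux mu s (length x) (del_at j (x @ [T]))))
     / (complex_of_real (\<Sum>j<length (x @ [T]). svc_rate mu (x @ [T]) j) + s)"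
    by (simp add: tagged_lt_def)
  ultimately show ?thesis
    by (simp add: svc_rate_snoc)
qed

lemma Re_rate_plus_pos:
  "mu \<ge> 0 \<Longrightarrow> Re s > 0 \<Longrightarrow> Re (complex_of_real (\<Sum>j<length xs. svc_rate mu xs j) + s) > 0"
  using sum_nonneg[of "{..<length xs}" "\<lambda>j. svc_rate mu xs j"] svc_rate_nonneg by simp

lemma holomorphic_tagged_lt:
  assumes "mu \<ge> 0"
  shows "(\<lambda>s. tagged_lt mu s xs) holomorphic_on {s. Re s > 0}"
proof -
  have "(\<lambda>s. tagged_lt_aux mu s n xs) holomorphic_on {s. Re s > 0}" for n
  proof (induction n arbitrary: xs)
    case (Suc n)
    have "complex_of_real (\<Sum>j<length xs. svc_rate mu xs j) + s \<noteq> 0" if "Re s > 0" for s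
      using Re_rate_plus_pos[OF assms that, of xs] by (metis less_irrefl zero_complex.sel(1))
    then show ?case
      by (auto intro!: holomorphic_intros Suc)
  qed simp
  then show ?thesis
    unfolding tagged_lt_def .
qed

lemma norm_first_step_le_1:
  fixes a :: real and b :: "'i \<Rightarrow> real" and z :: "'i \<Rightarrow> complex"
  assumes "a \<ge> 0" "\<forall>i\<in>I. b i \<ge> 0 \<and> norm (z i) \<le> 1" "Re s > 0"
  shows "norm ((of_real a + (\<Sum>i\<in>I. of_real (b i) * z i)) / (of_real (a + sum b I) + s)) \<le> 1"
proof -
  have "norm (\<Sum>i\<in>I. of_real (b i) * z i) \<le> (\<Sum>i\<in>I. norm (of_real (b i) * z i))"
    by (rule norm_sum)
  also have "\<dots> \<le> sum b I"
    using assms(2) by (intro sum_mono) (simp add: norm_mult mult_left_le)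
  finally have "norm (of_real a + (\<Sum>i\<in>I. of_real (b i) * z i)) \<le> a + sum b I"
    using assms(1) norm_triangle_ineq[of "of_real a" "\<Sum>i\<in>I. of_real (b i) * z i"] by simp
  moreover have "a + sum b I < Re (of_real (a + sum b I) + s)"
    using assms(3) by simp
  then have "a + sum b I < norm (of_real (a + sum b I) + s)"
    using complex_Re_le_cmod by (rule less_le_trans)
  ultimately show ?thesis
    by (simp add: norm_divide divide_le_eq_1)
qed

lemma norm_tagged_lt_le_1:
  assumes "mu \<ge> 0" "Re s > 0"
  shows "norm (tagged_lt mu s (x @ [T])) \<le> 1"
proof (induction "length x" arbitrary: x rule: less_induct)
  case less
  have "norm (tagged_lt mu s (del_at j x @ [T])) \<le> 1" if "j < length x" for j
    using that less by simp
  then have "norm ((of_real (svc_rate mu (x @ [T]) (length x))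
      + (\<Sum>j<length x. of_real (svc_rate mu x j) * tagged_lt mu s (del_at j x @ [T])))
      / (of_real (svc_rate mu (x @ [T]) (length x) + (\<Sum>j<length x. svc_rate mu x j)) + s)) \<le> 1"
    using assms by (intro norm_first_step_le_1) (auto intro: svc_rate_nonneg)
  then show ?case
    by (subst tagged_lt_snoc) (simp add: svc_rate_snoc ac_simps)
qed

lemma obtain_bij_betw_image:
  assumes "finite S" "A \<subseteq> S" "B \<subseteq> S" "card A = card B"
  obtains \<sigma> where "bij_betw \<sigma> S S" "\<sigma> ` A = B"
proof -
  have fin: "finite A" "finite B"
    using assms(1-3) by (auto intro: finite_subset)
  obtain f where f: "bij_betw f A B"
    using finite_same_card_bij[OF fin assms(4)] by blast
  have "card (S - A) = card (S - B)"
    using assms fin by (simp add: card_Diff_subset)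
  then obtain g where g: "bij_betw g (S - A) (S - B)"
    using finite_same_card_bij[of "S - A" "S - B"] assms(1) by blast
  define \<sigma> where "\<sigma> x = (if x \<in> A then f x else g x)" for x
  have "bij_betw \<sigma> A B"
    using f by (rule bij_betw_cong[THEN iffD1, rotated]) (simp add: \<sigma>_def)
  moreover have "bij_betw \<sigma> (S - A) (S - B)"
    using g by (rule bij_betw_cong[THEN iffD1, rotated]) (simp add: \<sigma>_def)
  ultimately have "bij_betw \<sigma> (A \<union> (S - A)) (B \<union> (S - B))"
    by (rule bij_betw_combine) blast
  moreover have "A \<union> (S - A) = S" "B \<union> (S - B) = S"
    using assms(2,3) by auto
  ultimately show ?thesis
    using that \<open>bij_betw \<sigma> A B\<close> by (simp add: bij_betw_def)
qed

lemma Tuples_Pow: "ts \<in> Tuples K d i \<Longrightarrow> set ts \<subseteq> Pow {..<K}"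
  using Types_subset by (fastforce simp: Tuples_def)

lemma relabel_Tuples:
  assumes \<sigma>: "bij_betw \<sigma> {..<K} {..<K}" and ts: "ts \<in> Tuples K d i"
  shows "map (image \<sigma>) ts \<in> Tuples K d i"
    and "F (map (image \<sigma>) ts) j = F ts j"
    and "T \<in> Types K d \<Longrightarrow> \<sigma> ` T \<in> set (take j (map (image \<sigma>) ts)) \<longleftrightarrow> T \<in> set (take j ts)"
    and "T \<in> Types K d \<Longrightarrow> \<sigma> ` T \<in> set (map (image \<sigma>) ts) \<longleftrightarrow> T \<in> set ts"
proof -
  have inj: "inj_on \<sigma> {..<K}" using \<sigma> by (rule bij_betw_imp_inj_on)
  have injP: "inj_on (image \<sigma>) (Pow {..<K})" using inj by (rule inj_on_image_Pow)
  have card: "card (\<sigma> ` U) = card U" if "U \<subseteq> {..<K}" for U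
    using inj that by (simp add: card_image inj_on_subset)
  have P: "set ts \<subseteq> Pow {..<K}" by (rule Tuples_Pow[OF ts])
  have "\<sigma> ` t \<in> Types K d" if "t \<in> set ts" for t
  proof -
    have t: "t \<in> Types K d" using that ts by (auto simp: Tuples_def)
    then show ?thesis
      using card[OF Types_subset[OF t]] Types_subset[OF t] bij_betw_imp_surj_on[OF \<sigma>]
      by (auto simp: Types_def)
  qed
  moreover have "distinct (map (image \<sigma>) ts)"
    using inj_on_subset[OF injP P] ts by (simp add: Tuples_def distinct_map)
  ultimately show "map (image \<sigma>) ts \<in> Tuples K d i"
    using ts by (auto simp: Tuples_def)
  have "\<Union>(set (take j ts)) \<subseteq> {..<K}"
    using P set_take_subset[of j ts] by blast
  moreover have "\<Union>(set (take j (map (image \<sigma>) ts))) = \<sigma> ` \<Union>(set (take j ts))"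
    by (simp add: take_map image_Union)
  ultimately show "F (map (image \<sigma>) ts) j = F ts j"
    unfolding F_def using card by simp
  show "\<sigma> ` T \<in> set (take j (map (image \<sigma>) ts)) \<longleftrightarrow> T \<in> set (take j ts)" if "T \<in> Types K d"
    using inj_on_image_mem_iff[OF injP _ subset_trans[OF set_take_subset P], of T j] Types_subset[OF that]
    by (simp add: take_map)
  show "\<sigma> ` T \<in> set (map (image \<sigma>) ts) \<longleftrightarrow> T \<in> set ts" if "T \<in> Types K d"
    using inj_on_image_mem_iff[OF injP _ P, of T] Types_subset[OF that] by simp
qed

lemma inj_on_relabel_Tuples:
  assumes "bij_betw \<sigma> {..<K} {..<K}"
  shows "inj_on (map (image \<sigma>)) (Tuples K d i)"
proof (rule inj_onI)
  fix xs ys assume "xs \<in> Tuples K d i" "ys \<in> Tuples K d i" "map (image \<sigma>) xs = map (image \<sigma>) ys"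
  then show "xs = ys"
    using inj_on_map_eq_map[OF inj_on_subset[OF inj_on_image_Pow[OF bij_betw_imp_inj_on[OF assms]]]]
      Tuples_Pow by blast
qed

lemma relabel_Tuples_image:
  "bij_betw \<sigma> {..<K} {..<K} \<Longrightarrow> map (image \<sigma>) ` Tuples K d i = Tuples K d i"
  by (rule endo_inj_surj[OF finite_Tuples _ inj_on_relabel_Tuples]) (auto intro: relabel_Tuples(1))

context coc
begin

definition sojourn_term :: "nat set \<Rightarrow> complex \<Rightarrow> real \<Rightarrow> nat \<Rightarrow> nat set list \<Rightarrow> complex" where
  "sojourn_term t1 s p0 i ts =
     (complex_of_real lam - s * of_nat (K choose d) * (if t1 \<in> set ts then 1 else 0))
       / complex_of_real lam
     * (complex_of_real lam ^ i * complex_of_real p0 /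
        (\<Prod>j=1..i. complex_of_real (mu * real (K choose d) * real (F ts j))
                    - of_nat j * complex_of_real lam
                    + s * of_nat (K choose d) * (if t1 \<in> set (take j ts) then 1 else 0)))"

definition sojourn_closed_form :: "nat set \<Rightarrow> complex \<Rightarrow> real \<Rightarrow> complex" where
  "sojourn_closed_form t1 s p0 = (\<Sum>i=0..ntypes. \<Sum>ts\<in>Tuples K d i. sojourn_term t1 s p0 i ts)"

text \<open>A relabelling of the servers carrying T to t1 permutes the tuples of each length and
  preserves every \<open>F\<^sub>j\<close>.\<close>

lemma sojourn_closed_form_type_indep:
  assumes T: "T \<in> Ty" and t1: "t1 \<in> Ty"
  shows "sojourn_closed_form T s p0 = sojourn_closed_form t1 s p0"
proof -
  obtain \<sigma> where \<sigma>: "bij_betw \<sigma> {..<K} {..<K}" and \<sigma>T: "\<sigma> ` T = t1"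
    using obtain_bij_betw_image[of "{..<K}" T t1] Types_subset[OF T] Types_subset[OF t1]
      Types_card[OF T] Types_card[OF t1] by auto
  have "(\<Sum>ts\<in>Tuples K d i. sojourn_term t1 s p0 i ts)
      = (\<Sum>ts\<in>Tuples K d i. sojourn_term t1 s p0 i (map (image \<sigma>) ts))" for i
    by (subst (1) relabel_Tuples_image[OF \<sigma>, symmetric])
       (rule sum.reindex[OF inj_on_relabel_Tuples[OF \<sigma>], unfolded comp_def])
  also have "\<dots> i = (\<Sum>ts\<in>Tuples K d i. sojourn_term T s p0 i ts)" for i
    using relabel_Tuples(2)[OF \<sigma>] relabel_Tuples(3,4)[OF \<sigma> _ T] \<sigma>T
    by (intro sum.cong refl) (simp add: sojourn_term_def)
  finally show ?thesis
    unfolding sojourn_closed_form_def by simp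
qed

end

text \<open>The tagged customer has type T and is the last one of \<open>x @ [T]\<close>; \<open>lst x\<close> is the transform of
  its sojourn time at \<open>s = svar\<close>.  Customers of type T behind it are marked by \<zeta>:
  \<open>tail_sum V\<close> sums the marked product weights of all continuations of a state with busy set V,
  and \<open>adj x\<close> weighs the state \<open>x @ [T]\<close> by its product form times this sum.\<close>

locale tagged = coc +
  fixes p :: "nat set list \<Rightarrow> real" and T :: "nat set" and \<zeta> :: complex
  assumes stationary: "stationary_dist K d lam mu p" and T_type: "T \<in> Ty" and norm_zeta: "norm \<zeta> < 1"
begin

definition svar :: complex where
  "svar = of_real (lam / real ntypes) * (1 - \<zeta>)"

definition mark :: "nat set \<Rightarrow> complex" where
  "mark a = of_real load * (if a = T then \<zeta> else 1)"

definition tail_sum :: "nat set \<Rightarrow> complex" where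
  "tail_sum V = infsum (weight mark V) St"

definition lst :: "nat set list \<Rightarrow> complex" where
  "lst x = tagged_lt mu svar (x @ [T])"

definition adj :: "nat set list \<Rightarrow> complex" where
  "adj x = of_real (product_form (x @ [T])) * tail_sum (servers (x @ [T]))"

definition tag_rate :: "nat set list \<Rightarrow> complex" where
  "tag_rate x = of_real (svc_rate mu (x @ [T]) (length x))"

definition exit_rate :: "nat set list \<Rightarrow> complex" where
  "exit_rate x = of_real (mu * real (card (servers (x @ [T])))) + svar"

lemma Re_svar_pos: "Re svar > 0"
proof -
  have "Re \<zeta> < 1" using complex_Re_le_cmod[of \<zeta>] norm_zeta by simp
  then show ?thesis unfolding svar_def using lam_pos ntypes_pos by simp
qed

lemma svar_ntypes: "svar * of_nat ntypes = of_real lam * (1 - \<zeta>)"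
  unfolding svar_def using ntypes_pos by simp

lemma weight_mark: "weight mark V b = of_real (weight (\<lambda>_. load) V b) * \<zeta> ^ count_list b T"
  unfolding mark_def weight_marked_const of_real_weight ..

lemma mark_stable: "\<forall>A\<subseteq>Ty. A \<noteq> {} \<longrightarrow> (\<Sum>a\<in>A. norm (mark a)) < real (card (\<Union>A))"
proof (intro allI impI)
  fix A assume A: "A \<subseteq> Ty" "A \<noteq> {}"
  have "(\<Sum>a\<in>A. norm (mark a)) \<le> (\<Sum>a\<in>A. load)"
    using norm_zeta load_pos by (intro sum_mono) (auto simp: mark_def norm_mult)
  also have "\<dots> < real (card (\<Union>A))"
    using stability_condition[OF stationary A] by simp
  finally show "(\<Sum>a\<in>A. norm (mark a)) < real (card (\<Union>A))" .
qed

lemma has_sum_weight_mark: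
  assumes "A \<subseteq> Ty"
  shows "(weight mark (\<Union>A) has_sum tail_sum (\<Union>A)) St"
proof -
  have "weight mark (\<Union>A) summable_on St"
    using has_sum_weight_lists_tuple_sum[OF finite_Types _ mark_stable assms] Ty_finite_nonempty
    by (auto simp: States_def summable_on_def)
  then show ?thesis
    unfolding tail_sum_def by (rule has_sum_infsum)
qed

lemma has_sum_weight_mark_empty: "(weight mark {} has_sum tuple_sum mark Ty {}) St"
  using has_sum_weight_lists[OF finite_Types _ mark_stable] Ty_finite_nonempty
  by (simp add: States_def)

lemma tail_sum_rec:
  assumes "A \<subseteq> Ty"
  shows "tail_sum (\<Union>A) = 1 + (\<Sum>t\<in>Ty. mark t / of_nat (card (\<Union>A \<union> t)) * tail_sum (\<Union>A \<union> t))"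
proof -
  have "(weight mark (\<Union>A) has_sum (1 + (\<Sum>t\<in>Ty - {}. mark t / of_nat (card (\<Union>A \<union> t)) *
          tail_sum (\<Union>A \<union> t)))) (fresh_lists Ty {})"
  proof (rule has_sum_weight_fresh_lists[OF finite_Types])
    fix t assume "t \<in> Ty - {}"
    then have "(weight mark (\<Union>(insert t A)) has_sum tail_sum (\<Union>(insert t A))) St"
      using assms by (intro has_sum_weight_mark) auto
    moreover have "\<Union>(insert t A) = \<Union>A \<union> t" by auto
    ultimately show "(weight mark (\<Union>A \<union> t) has_sum tail_sum (\<Union>A \<union> t)) {b. set b \<subseteq> Ty}"
      by (simp add: States_def)
  qed
  then show ?thesis
    unfolding fresh_lists_empty tail_sum_def[of "\<Union>A"] by (simp add: infsumI States_def)
qed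

text \<open>For a busy set containing T the recursion closes: adding a type-T customer does not enlarge
  the busy set, so its term is a multiple of \<open>tail_sum V\<close> itself, and the mark turns into the
  discount svar.\<close>

lemma tail_sum_balance:
  assumes A: "A \<subseteq> Ty" "T \<in> A"
  defines "V \<equiv> \<Union>A"
  shows "tail_sum V * (of_real (mu * real (card V)) + svar)
       = of_real (mu * real (card V))
         + of_real (lam / real ntypes * real (card V)) * (\<Sum>t\<in>Ty. tail_sum (V \<union> t) / of_nat (card (V \<union> t)))"
proof -
  define S where "S = (\<Sum>t\<in>Ty. tail_sum (V \<union> t) / of_nat (card (V \<union> t)))"
  have VT: "V \<union> T = V" using A by (auto simp: V_def)
  have "finite V"
    unfolding V_def using A(1) by (intro finite_Union) (auto intro: finite_subset[OF _ finite_Types] Types_finite)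
  moreover have "T \<subseteq> V" "T \<noteq> {}" using A Ty_finite_nonempty[OF T_type] by (auto simp: V_def)
  ultimately have "card V > 0"
    by (auto simp: card_gt_0_iff)
  then have cV: "(of_nat (card V) :: complex) \<noteq> 0" by simp
  have "(\<Sum>t\<in>Ty. mark t / of_nat (card (V \<union> t)) * tail_sum (V \<union> t))
      = (\<Sum>t\<in>Ty. of_real load * (tail_sum (V \<union> t) / of_nat (card (V \<union> t)))
           - (if t = T then of_real load * (1 - \<zeta>) * tail_sum (V \<union> t) / of_nat (card (V \<union> t)) else 0))"
    by (intro sum.cong refl) (simp add: mark_def algebra_simps diff_divide_distrib)
  also have "\<dots> = of_real load * S - of_real load * (1 - \<zeta>) * tail_sum V / of_nat (card V)"
    using T_type finite_Types by (simp add: sum_subtractf sum.delta sum_distrib_left S_def VT)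
  finally have "tail_sum V = 1 + of_real load * S - of_real load * (1 - \<zeta>) * tail_sum V / of_nat (card V)"
    using tail_sum_rec[OF A(1)] by (simp add: V_def)
  then have key: "tail_sum V * of_nat (card V)
      = of_nat (card V) + of_real load * of_nat (card V) * S - of_real load * (1 - \<zeta>) * tail_sum V"
    using cV by (simp add: field_simps)
  have "tail_sum V * (of_real (mu * real (card V)) + svar)
        - (of_real (mu * real (card V)) + of_real (lam / real ntypes * real (card V)) * S)
      = of_real mu * (tail_sum V * of_nat (card V)
        - (of_nat (card V) + of_real load * of_nat (card V) * S - of_real load * (1 - \<zeta>) * tail_sum V))"
    unfolding svar_def load_mu[symmetric] by (simp add: algebra_simps)
  with key show ?thesis
    unfolding S_def by simp
qed

text \<open>Partial balance for a type-T' customer inserted in front of the tagged one: the missing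
  insertion behind it accounts for the factor \<open>|V| / |V \<union> T'|\<close>.\<close>

lemma departure_balance_snoc:
  assumes x: "x \<in> St" and T': "T' \<in> Ty"
  defines "V \<equiv> servers (x @ [T])"
  shows "(\<Sum>j\<le>length x. product_form (ins_at j T' x @ [T]) * svc_rate mu (ins_at j T' x) j)
       = product_form (x @ [T]) * (lam / real ntypes) * real (card V) / real (card (V \<union> T'))"
proof -
  define y where "y = x @ [T]"
  have y: "set y \<subseteq> Ty" using x T_type by (simp add: y_def St_iff)
  have fV: "finite V" unfolding V_def y_def[symmetric] by (rule finite_servers[OF y])
  have cp: "card (V \<union> T') > 0" using fV Ty_finite_nonempty[OF T'] by (simp add: card_gt_0_iff)
  have "(\<Sum>j\<le>length y. product_form (ins_at j T' y) * svc_rate mu (ins_at j T' y) j)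
      = (\<Sum>j\<le>length x. product_form (ins_at j T' x @ [T]) * svc_rate mu (ins_at j T' x) j)
        + product_form (y @ [T']) * svc_rate mu (y @ [T']) (length y)"
    by (simp add: y_def ins_at_snoc svc_rate_snoc ins_at_length[of "x @ [T]", simplified])
  moreover have "product_form (y @ [T']) * svc_rate mu (y @ [T']) (length y)
      = product_form y * (lam / real ntypes) * (real (card (V \<union> T')) - real (card V))
        / real (card (V \<union> T'))"
  proof -
    have "product_form (y @ [T']) = product_form y * (load / real (card (V \<union> T')))"
      unfolding V_def y_def[symmetric] by (rule product_form_snoc)
    moreover have "svc_rate mu (y @ [T']) (length y) = mu * (real (card (V \<union> T')) - real (card V))"
      using card_Un_Diff[OF fV Ty_finite_nonempty[THEN conjunct1, OF T']] svc_rate_snoc_last[of mu y T']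
      by (simp add: V_def y_def[symmetric])
    ultimately have "product_form (y @ [T']) * svc_rate mu (y @ [T']) (length y)
        = product_form y * (load * mu) * (real (card (V \<union> T')) - real (card V)) / real (card (V \<union> T'))"
      by simp
    then show ?thesis
      by (simp only: load_mu)
  qed
  ultimately show ?thesis
    using product_form_departure_balance[OF y T'] cp ntypes_pos
    by (simp add: y_def field_simps)
qed

text \<open>Adjoint balance: the adjoint weights are stationary for the reversed dynamics of the
  customers in front of the tagged one, with the tagged customer's own service acting as
  killing at rate svar.\<close>

lemma adjoint_balance:
  assumes x: "x \<in> St"
  shows "adj x * exit_rate x = of_real (product_form x * lam / real ntypes)
       + (\<Sum>j\<le>length x. \<Sum>T'\<in>Ty. adj (ins_at j T' x) * of_real (svc_rate mu (ins_at j T' x) j))"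
proof -
  define V where "V = servers (x @ [T])"
  have xT: "set (x @ [T]) \<subseteq> Ty" using x T_type by (simp add: St_iff)
  have V: "V = \<Union>(set (x @ [T]))" by (simp add: V_def servers_def)
  have adj_ins: "adj (ins_at j T' x) = of_real (product_form (ins_at j T' x @ [T])) * tail_sum (V \<union> T')"
    for j T'
    by (simp add: adj_def V_def Un_ac)
  have "(\<Sum>j\<le>length x. \<Sum>T'\<in>Ty. adj (ins_at j T' x) * of_real (svc_rate mu (ins_at j T' x) j))
      = (\<Sum>T'\<in>Ty. tail_sum (V \<union> T') * of_real (\<Sum>j\<le>length x.
            product_form (ins_at j T' x @ [T]) * svc_rate mu (ins_at j T' x) j))"
    by (subst sum.swap) (simp add: adj_ins sum_distrib_left mult_ac)
  also have "\<dots> = (\<Sum>T'\<in>Ty. tail_sum (V \<union> T') * of_real (product_form (x @ [T]) * (lam / real ntypes)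
                                 * real (card V) / real (card (V \<union> T'))))"
    by (intro sum.cong refl) (simp add: departure_balance_snoc[OF x] V_def)
  also have "\<dots> = of_real (product_form (x @ [T])) * (of_real (lam / real ntypes * real (card V)) *
            (\<Sum>T'\<in>Ty. tail_sum (V \<union> T') / of_nat (card (V \<union> T'))))"
    by (simp add: sum_distrib_left divide_inverse mult_ac)
  finally have dep: "(\<Sum>j\<le>length x. \<Sum>T'\<in>Ty. adj (ins_at j T' x) * of_real (svc_rate mu (ins_at j T' x) j))
      = \<dots>" .
  have arr: "product_form x * lam / real ntypes = product_form (x @ [T]) * (mu * real (card V))"
    using product_form_arrival_balance[OF xT] by (simp add: V_def)
  have "adj x * exit_rate x = of_real (product_form (x @ [T])) * (tail_sum V * (of_real (mu * real (card V)) + svar))"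
    by (simp add: adj_def exit_rate_def V_def)
  also have "\<dots> = of_real (product_form (x @ [T])) * (of_real (mu * real (card V))
         + of_real (lam / real ntypes * real (card V)) * (\<Sum>t\<in>Ty. tail_sum (V \<union> t) / of_nat (card (V \<union> t))))"
    using tail_sum_balance[of "set (x @ [T])"] xT by (simp add: V)
  finally show ?thesis
    by (simp add: dep arr distrib_left)
qed

lemma snoc_St: "x \<in> St \<Longrightarrow> x @ [T] \<in> St"
  using T_type by (simp add: St_iff)

lemma summable_product_form: "product_form summable_on St"
  using has_sum_product_form[OF stationary] by (auto simp: summable_on_def)

lemma summable_product_form_snoc: "(\<lambda>x. product_form (x @ [T])) summable_on St"
proof -
  have "product_form summable_on ((\<lambda>x. x @ [T]) ` St)"
    by (rule summable_on_subset_banach[OF summable_product_form]) (auto intro: snoc_St)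
  then show ?thesis
    by (subst (asm) summable_on_reindex) (auto simp: comp_def inj_on_def)
qed

text \<open>Busy sets lie in \<open>{..<K}\<close>, so \<open>tail_sum\<close> takes only finitely many relevant values.\<close>

definition tail_sum_bound :: real where
  "tail_sum_bound = (\<Sum>V\<in>Pow {..<K}. norm (tail_sum V))"

lemma tail_sum_bound_nonneg: "tail_sum_bound \<ge> 0"
  unfolding tail_sum_bound_def by (intro sum_nonneg) auto

lemma norm_adj_le: "x \<in> St \<Longrightarrow> norm (adj x) \<le> tail_sum_bound * product_form (x @ [T])"
proof -
  assume x: "x \<in> St"
  then have "servers (x @ [T]) \<in> Pow {..<K}"
    using servers_subset[of "x @ [T]" K d] snoc_St[OF x] by (simp add: St_iff)
  then have "norm (tail_sum (servers (x @ [T]))) \<le> tail_sum_bound"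
    unfolding tail_sum_bound_def by (intro member_le_sum) auto
  then have "product_form (x @ [T]) * norm (tail_sum (servers (x @ [T])))
      \<le> product_form (x @ [T]) * tail_sum_bound"
    using product_form_nonneg[OF snoc_St[OF x]] by (rule mult_left_mono)
  then show ?thesis
    unfolding adj_def using product_form_nonneg[OF snoc_St[OF x]]
    by (simp add: norm_mult mult.commute)
qed

lemma norm_lst_le: "norm (lst x) \<le> 1"
  unfolding lst_def using mu_pos Re_svar_pos by (intro norm_tagged_lt_le_1) auto

definition first_step_flow :: "nat set list \<Rightarrow> nat \<Rightarrow> complex" where
  "first_step_flow y j = adj y * of_real (svc_rate mu y j) * lst (del_at j y)"

definition adjoint_flow :: "nat set list \<Rightarrow> nat \<times> nat set \<Rightarrow> complex" where
  "adjoint_flow x z = adj (ins_at (fst z) (snd z) x)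
     * of_real (svc_rate mu (ins_at (fst z) (snd z) x) (fst z)) * lst x"

lemma summable_first_step_flow:
  "(\<lambda>(y, j). first_step_flow y j) summable_on Sigma St (\<lambda>y. {..<length y})"
proof (rule summable_on_norm_le)
  let ?g = "\<lambda>(y, j). tail_sum_bound * product_form (y @ [T]) * svc_rate mu y j"
  show "?g summable_on Sigma St (\<lambda>y. {..<length y})"
  proof (rule summable_on_SigmaI[where g = "\<lambda>y. tail_sum_bound * product_form (y @ [T]) * departure_rate y"])
    show "(\<lambda>y. tail_sum_bound * product_form (y @ [T]) * departure_rate y) summable_on St"
    proof (rule summable_on_norm_le)
      show "(\<lambda>y. mu * real K * tail_sum_bound * product_form (y @ [T])) summable_on St"
        using summable_on_cmult_right[OF summable_product_form_snoc, of "mu * real K * tail_sum_bound"]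
        by (simp add: mult.assoc)
      fix y assume y: "y \<in> St"
      have nn: "0 \<le> tail_sum_bound * product_form (y @ [T])"
        using tail_sum_bound_nonneg product_form_nonneg[OF snoc_St[OF y]] by simp
      then have "norm (tail_sum_bound * product_form (y @ [T]) * departure_rate y)
          = tail_sum_bound * product_form (y @ [T]) * departure_rate y"
        using departure_rate_nonneg[of y] by (metis real_norm_def abs_of_nonneg mult_nonneg_nonneg)
      also have "\<dots> \<le> tail_sum_bound * product_form (y @ [T]) * (mu * real K)"
        using departure_rate_le[OF y] nn by (rule mult_left_mono)
      finally show "norm (tail_sum_bound * product_form (y @ [T]) * departure_rate y)
          \<le> mu * real K * tail_sum_bound * product_form (y @ [T])"
        by (simp add: mult_ac)
    qed
  qed (auto simp: departure_rate_def sum_distrib_left tail_sum_bound_nonneg product_form_nonneg snoc_St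
      svc_rate_nonneg mu_pos less_imp_le intro!: has_sum_finiteI)
next
  fix z assume "z \<in> Sigma St (\<lambda>y. {..<length y})"
  then obtain y j where z: "z = (y, j)" "y \<in> St" by auto
  have "norm (first_step_flow y j) = norm (adj y) * svc_rate mu y j * norm (lst (del_at j y))"
    unfolding first_step_flow_def using svc_rate_nonneg[of mu y j] mu_pos by (simp add: norm_mult)
  also have "\<dots> \<le> (tail_sum_bound * product_form (y @ [T])) * svc_rate mu y j * 1"
    using norm_adj_le[OF z(2)] norm_lst_le svc_rate_nonneg[of mu y j] mu_pos
      tail_sum_bound_nonneg product_form_nonneg[OF snoc_St[OF z(2)]]
    by (intro mult_mono) auto
  finally show "norm (case z of (y, j) \<Rightarrow> first_step_flow y j)
      \<le> (case z of (y, j) \<Rightarrow> tail_sum_bound * product_form (y @ [T]) * svc_rate mu y j)"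
    using z by simp
qed

lemma has_sum_adjoint_flow_iff:
  "((\<lambda>(x, z). adjoint_flow x z) has_sum S) (Sigma St (\<lambda>x. {..length x} \<times> Ty))
   \<longleftrightarrow> ((\<lambda>(y, j). first_step_flow y j) has_sum S) (Sigma St (\<lambda>y. {..<length y}))"
proof (rule has_sum_reindex_bij_witness[where j = "\<lambda>(x, z). (ins_at (fst z) (snd z) x, fst z)"
      and i = "\<lambda>(y, j). (del_at j y, (j, y ! j))"])
  fix b assume "b \<in> Sigma St (\<lambda>y. {..<length y})"
  then obtain y j where b: "b = (y, j)" "y \<in> St" "j < length y" by auto
  then show "(case case b of (y, j) \<Rightarrow> (del_at j y, j, y ! j) of (x, z) \<Rightarrow> (ins_at (fst z) (snd z) x, fst z)) = b"
    by (simp add: ins_at_del_at)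
  show "(case b of (y, j) \<Rightarrow> (del_at j y, j, y ! j)) \<in> Sigma St (\<lambda>x. {..length x} \<times> Ty)"
    using b set_del_at_subset[of j y] by (auto simp: St_iff)
qed (auto simp: St_iff first_step_flow_def adjoint_flow_def)

lemma lst_first_step:
  assumes x: "x \<in> St"
  shows "adj x * exit_rate x * lst x = adj x * tag_rate x + (\<Sum>j<length x. first_step_flow x j)"
proof -
  have rate: "(\<Sum>j<length (x @ [T]). svc_rate mu (x @ [T]) j) = mu * real (card (servers (x @ [T])))"
    using snoc_St[OF x] by (intro sum_svc_rate_St) (simp add: St_iff)
  have exit: "exit_rate x = of_real (\<Sum>j<length (x @ [T]). svc_rate mu (x @ [T]) j) + svar"
    unfolding exit_rate_def rate ..
  have "exit_rate x \<noteq> 0"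
    using Re_rate_plus_pos[of mu svar "x @ [T]"] mu_pos Re_svar_pos
    unfolding exit by (metis less_irrefl less_imp_le zero_complex.sel(1))
  moreover have "lst x = (tag_rate x + (\<Sum>j<length x. of_real (svc_rate mu x j) * lst (del_at j x)))
      / exit_rate x"
    unfolding lst_def tag_rate_def exit by (rule tagged_lt_snoc)
  ultimately have "exit_rate x * lst x = tag_rate x + (\<Sum>j<length x. of_real (svc_rate mu x j) * lst (del_at j x))"
    by simp
  then show ?thesis
    by (simp add: first_step_flow_def distrib_left sum_distrib_left mult_ac)
qed

lemma adjoint_balance_lst:
  assumes x: "x \<in> St"
  shows "adj x * exit_rate x * lst x
       = lst x * of_real (product_form x * lam / real ntypes) + (\<Sum>z\<in>{..length x} \<times> Ty. adjoint_flow x z)"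
proof -
  have "adj x * exit_rate x * lst x = lst x * (adj x * exit_rate x)"
    by (simp add: mult_ac)
  also have "\<dots> = lst x * of_real (product_form x * lam / real ntypes)
      + (\<Sum>j\<le>length x. \<Sum>T'\<in>Ty. adjoint_flow x (j, T'))"
    unfolding adjoint_balance[OF x] by (simp add: adjoint_flow_def distrib_left sum_distrib_left mult_ac)
  also have "(\<Sum>j\<le>length x. \<Sum>T'\<in>Ty. adjoint_flow x (j, T')) = (\<Sum>z\<in>{..length x} \<times> Ty. adjoint_flow x z)"
    by (simp add: sum.cartesian_product)
  finally show ?thesis .
qed

lemma summable_adj_tag_rate: "(\<lambda>x. adj x * tag_rate x) summable_on St"
proof (rule summable_on_norm_le)
  show "(\<lambda>x. mu * real K * tail_sum_bound * product_form (x @ [T])) summable_on St"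
    using summable_on_cmult_right[OF summable_product_form_snoc, of "mu * real K * tail_sum_bound"]
    by (simp add: mult.assoc)
  fix x assume x: "x \<in> St"
  have "norm (tag_rate x) \<le> mu * real K"
    unfolding tag_rate_def using svc_rate_le[OF snoc_St[OF x], of "length x"] svc_rate_nonneg[of mu]
      mu_pos by simp
  then have "norm (adj x) * norm (tag_rate x) \<le> (tail_sum_bound * product_form (x @ [T])) * (mu * real K)"
    using norm_adj_le[OF x] tail_sum_bound_nonneg product_form_nonneg[OF snoc_St[OF x]]
    by (intro mult_mono) auto
  then show "norm (adj x * tag_rate x) \<le> mu * real K * tail_sum_bound * product_form (x @ [T])"
    by (simp add: norm_mult mult_ac)
qed

lemma summable_product_form_lst: "(\<lambda>x. of_real (product_form x) * lst x) summable_on St"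
proof (rule summable_on_norm_le[OF summable_product_form])
  fix x assume "x \<in> St"
  then show "norm (of_real (product_form x) * lst x) \<le> product_form x"
    using norm_lst_le[of x] product_form_nonneg by (simp add: norm_mult mult_left_le)
qed

lemma summable_lst_arrival: "(\<lambda>x. lst x * of_real (product_form x * lam / real ntypes)) summable_on St"
proof -
  have "(\<lambda>x. lst x * of_real (product_form x * lam / real ntypes))
      = (\<lambda>x. of_real (lam / real ntypes) * (of_real (product_form x) * lst x))"
    by (simp add: mult_ac)
  then show ?thesis
    using summable_on_cmult_right[OF summable_product_form_lst, of "of_real (lam / real ntypes)"]
    by simp
qed

text \<open>Multiplying the first-step equation of lst by adj and the adjoint balance equation by lst,
  the two double sums of flows agree after reindexing, leaving this identity.\<close>

lemma infsum_adj_tag_rate_eq: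
  "infsum (\<lambda>x. adj x * tag_rate x) St
   = of_real (lam / real ntypes) * infsum (\<lambda>x. of_real (product_form x) * lst x) St"
proof -
  define S where "S = infsum (\<lambda>(y, j). first_step_flow y j) (Sigma St (\<lambda>y. {..<length y}))"
  have hfirst: "((\<lambda>(y, j). first_step_flow y j) has_sum S) (Sigma St (\<lambda>y. {..<length y}))"
    using summable_first_step_flow unfolding S_def by simp
  then have hadj: "((\<lambda>(x, z). adjoint_flow x z) has_sum S) (Sigma St (\<lambda>x. {..length x} \<times> Ty))"
    by (simp add: has_sum_adjoint_flow_iff)
  have "((\<lambda>x. \<Sum>j<length x. first_step_flow x j) has_sum S) St"
    using has_sum_Sigma'[OF hfirst] by (simp add: has_sum_finite)
  then have "((\<lambda>x. adj x * exit_rate x * lst x) has_sum (infsum (\<lambda>x. adj x * tag_rate x) St + S)) St"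
    using has_sum_add[OF has_sum_infsum[OF summable_adj_tag_rate]] lst_first_step
    by (subst has_sum_cong) auto
  moreover have "((\<lambda>x. \<Sum>z\<in>{..length x} \<times> Ty. adjoint_flow x z) has_sum S) St"
    using has_sum_Sigma'[OF hadj] finite_Types by (simp add: has_sum_finite)
  then have "((\<lambda>x. adj x * exit_rate x * lst x) has_sum
      (infsum (\<lambda>x. lst x * of_real (product_form x * lam / real ntypes)) St + S)) St"
    using has_sum_add[OF has_sum_infsum[OF summable_lst_arrival]] adjoint_balance_lst
    by (subst has_sum_cong) auto
  ultimately have "infsum (\<lambda>x. adj x * tag_rate x) St
      = infsum (\<lambda>x. lst x * of_real (product_form x * lam / real ntypes)) St"
    using has_sum_unique by fastforce
  also have "\<dots> = infsum (\<lambda>x. of_real (lam / real ntypes) * (of_real (product_form x) * lst x)) St"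
    by (simp add: mult_ac)
  also have "\<dots> = of_real (lam / real ntypes) * infsum (\<lambda>x. of_real (product_form x) * lst x) St"
    by (rule infsum_cmult_right')
  finally show ?thesis .
qed

definition marked_departure_flow :: "nat set list \<times> nat \<Rightarrow> complex" where
  "marked_departure_flow z = \<zeta> ^ count_list (fst z) T *
     of_real (product_form (ins_at (snd z) T (fst z)) * svc_rate mu (ins_at (snd z) T (fst z)) (snd z))"

definition tag_flow :: "nat set list \<times> nat set list \<Rightarrow> complex" where
  "tag_flow z = of_real (product_form (fst z @ T # snd z)) * \<zeta> ^ count_list (snd z) T * tag_rate (fst z)"

lemma sum_marked_departure_flow:
  assumes "y \<in> St"
  shows "(\<Sum>j\<le>length y. marked_departure_flow (y, j))
           = \<zeta> ^ count_list y T * of_real (product_form y * lam / real ntypes)"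
    and "(\<Sum>j\<le>length y. norm (marked_departure_flow (y, j)))
           = norm \<zeta> ^ count_list y T * (product_form y * lam / real ntypes)"
proof -
  have balance: "(\<Sum>j\<le>length y. product_form (ins_at j T y) * svc_rate mu (ins_at j T y) j)
      = product_form y * lam / real ntypes"
    using assms T_type by (intro product_form_departure_balance) (auto simp: St_iff)
  have "(\<Sum>j\<le>length y. marked_departure_flow (y, j)) = \<zeta> ^ count_list y T *
      of_real (\<Sum>j\<le>length y. product_form (ins_at j T y) * svc_rate mu (ins_at j T y) j)"
    unfolding marked_departure_flow_def fst_conv snd_conv of_real_sum sum_distrib_left ..
  then show "(\<Sum>j\<le>length y. marked_departure_flow (y, j))
      = \<zeta> ^ count_list y T * of_real (product_form y * lam / real ntypes)"
    by (simp only: balance)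
  have "0 \<le> product_form (ins_at j T y) * svc_rate mu (ins_at j T y) j" for j
    using assms T_type mu_pos product_form_nonneg[OF ins_at_St] svc_rate_nonneg by simp
  then have "norm (marked_departure_flow (y, j))
      = norm \<zeta> ^ count_list y T * (product_form (ins_at j T y) * svc_rate mu (ins_at j T y) j)" for j
    unfolding marked_departure_flow_def norm_mult norm_power norm_of_real fst_conv snd_conv
    by (simp only: abs_of_nonneg)
  then have "(\<Sum>j\<le>length y. norm (marked_departure_flow (y, j))) = norm \<zeta> ^ count_list y T *
      (\<Sum>j\<le>length y. product_form (ins_at j T y) * svc_rate mu (ins_at j T y) j)"
    by (simp add: sum_distrib_left)
  then show "(\<Sum>j\<le>length y. norm (marked_departure_flow (y, j)))
      = norm \<zeta> ^ count_list y T * (product_form y * lam / real ntypes)"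
    by (simp only: balance)
qed

lemma has_sum_marked_departure_flow:
  "(marked_departure_flow has_sum (of_real (lam / real ntypes) * tuple_sum mark Ty {})) (Sigma St (\<lambda>y. {..length y}))"
proof (rule has_sum_SigmaI_norm[where g = "\<lambda>y. \<zeta> ^ count_list y T * of_real (product_form y * lam / real ntypes)"
      and gn = "\<lambda>y. norm \<zeta> ^ count_list y T * (product_form y * lam / real ntypes)"])
  show "((\<lambda>y. \<zeta> ^ count_list y T * of_real (product_form y * lam / real ntypes)) has_sum
      of_real (lam / real ntypes) * tuple_sum mark Ty {}) St"
    using has_sum_cmult_right[OF has_sum_weight_mark_empty, of "of_real (lam / real ntypes)"]
    by (simp add: weight_mark product_form_def mult_ac)
  show "(\<lambda>y. norm \<zeta> ^ count_list y T * (product_form y * lam / real ntypes)) summable_on St"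
  proof (rule summable_on_norm_le)
    show "(\<lambda>y. product_form y * (lam / real ntypes)) summable_on St"
      by (rule summable_on_cmult_left[OF summable_product_form])
    fix y assume "y \<in> St"
    then have X: "0 \<le> product_form y * lam / real ntypes"
      using product_form_nonneg lam_pos by simp
    then have "norm (norm \<zeta> ^ count_list y T * (product_form y * lam / real ntypes))
        = norm \<zeta> ^ count_list y T * (product_form y * lam / real ntypes)"
      by (metis abs_of_nonneg mult_nonneg_nonneg norm_ge_zero real_norm_def zero_le_power)
    also have "\<dots> \<le> 1 * (product_form y * lam / real ntypes)"
      using X norm_zeta by (intro mult_right_mono) (simp_all add: power_le_one)
    finally show "norm (norm \<zeta> ^ count_list y T * (product_form y * lam / real ntypes))
        \<le> product_form y * (lam / real ntypes)"
      by simp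
  qed
qed (use sum_marked_departure_flow in \<open>auto intro: has_sum_finiteI\<close>)

text \<open>Splitting \<open>x @ T # b\<close> at the tagged customer: a type-T customer in x leaves the tagged one
  no idle server, so its flow vanishes, and otherwise all marks sit in b.\<close>

lemma marked_departure_flow_append:
  assumes "x \<in> St"
  shows "marked_departure_flow (x @ b, length x) = tag_flow (x, b)"
proof -
  have ins: "ins_at (length x) T (x @ b) = x @ T # b" by (simp add: ins_at_def)
  have rate: "svc_rate mu (x @ T # b) (length x) = mu * real (card (T - servers x))"
    by (simp add: svc_rate_servers nth_append)
  have tag: "tag_rate x = of_real (mu * real (card (T - servers x)))"
    unfolding tag_rate_def by (simp add: svc_rate_snoc_last)
  show ?thesis
  proof (cases "T \<in> set x")
    case True
    then have "card (T - servers x) = 0" by (metis Diff_eq_empty_iff Sup_upper card.empty servers_def)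
    then show ?thesis by (simp add: marked_departure_flow_def tag_flow_def ins rate tag)
  next
    case False
    then have "count_list x T = 0" by (simp add: count_list_0_iff)
    then show ?thesis by (simp add: marked_departure_flow_def tag_flow_def ins rate tag mult_ac)
  qed
qed

lemma has_sum_tag_flow:
  "(tag_flow has_sum (of_real (lam / real ntypes) * tuple_sum mark Ty {})) (St \<times> St)"
proof -
  have "(tag_flow has_sum (of_real (lam / real ntypes) * tuple_sum mark Ty {})) (St \<times> St)
      \<longleftrightarrow> (marked_departure_flow has_sum (of_real (lam / real ntypes) * tuple_sum mark Ty {}))
            (Sigma St (\<lambda>y. {..length y}))"
  proof (rule has_sum_reindex_bij_witness[where j = "\<lambda>z. (fst z @ snd z, length (fst z))"
        and i = "\<lambda>z. (take (snd z) (fst z), drop (snd z) (fst z))"])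
    fix z assume "z \<in> Sigma St (\<lambda>y. {..length y})"
    then show "(take (snd z) (fst z), drop (snd z) (fst z)) \<in> St \<times> St"
      by (force simp: St_iff dest: in_set_takeD in_set_dropD)
  next
    fix a assume "a \<in> St \<times> St"
    then show "marked_departure_flow (fst a @ snd a, length (fst a)) = tag_flow a"
      by (cases a) (simp add: marked_departure_flow_append)
  qed (auto simp: St_iff min_def)
  then show ?thesis
    using has_sum_marked_departure_flow by simp
qed

lemma infsum_tag_flow:
  assumes x: "x \<in> St"
  shows "infsum (\<lambda>b. tag_flow (x, b)) St = adj x * tag_rate x"
proof -
  have xT: "set (x @ [T]) \<subseteq> Ty" using snoc_St[OF x] by (simp add: St_iff)
  have "tag_flow (x, b) = (of_real (product_form (x @ [T])) * tag_rate x) * weight mark (servers (x @ [T])) b" for b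
    using weight_append[of "\<lambda>_. load" "{}" "x @ [T]" b]
    by (simp add: tag_flow_def weight_mark product_form_def mult_ac)
  moreover have "(weight mark (servers (x @ [T])) has_sum tail_sum (servers (x @ [T]))) St"
    using has_sum_weight_mark[OF xT] by (simp add: servers_def)
  ultimately show ?thesis
    by (simp add: adj_def infsumI has_sum_cmult_right mult_ac)
qed

lemma infsum_adj_tag_rate:
  "infsum (\<lambda>x. adj x * tag_rate x) St = of_real (lam / real ntypes) * tuple_sum mark Ty {}"
proof -
  have "infsum (\<lambda>x. adj x * tag_rate x) St = infsum (\<lambda>x. infsum (\<lambda>b. tag_flow (x, b)) St) St"
    by (rule infsum_cong) (simp add: infsum_tag_flow)
  also have "\<dots> = infsum tag_flow (St \<times> St)"
    using has_sum_tag_flow by (intro infsum_Sigma_banach) (auto simp: summable_on_def)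
  also have "\<dots> = of_real (lam / real ntypes) * tuple_sum mark Ty {}"
    using has_sum_tag_flow by (rule infsumI)
  finally show ?thesis .
qed

theorem has_sum_product_form_lst:
  "((\<lambda>x. of_real (product_form x) * lst x) has_sum tuple_sum mark Ty {}) St"
proof -
  have "of_real (lam / real ntypes) * infsum (\<lambda>x. of_real (product_form x) * lst x) St
      = of_real (lam / real ntypes) * tuple_sum mark Ty {}"
    using infsum_adj_tag_rate_eq[symmetric] infsum_adj_tag_rate by (rule trans)
  moreover have "(of_real (lam / real ntypes) :: complex) \<noteq> 0"
    using lam_pos ntypes_pos by simp
  ultimately have "infsum (\<lambda>x. of_real (product_form x) * lst x) St = tuple_sum mark Ty {}"
    by (metis mult_left_cancel)
  then show ?thesis
    using summable_product_form_lst by (metis has_sum_infsum)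
qed

lemma sum_mark:
  assumes "finite A"
  shows "(\<Sum>a\<in>A. mark a) = of_nat (card A) * (of_real load * 1) - of_real load * (if T \<in> A then 1 - \<zeta> else 0)"
proof -
  have "mark a = of_real load - (if a = T then of_real load * (1 - \<zeta>) else 0)" for a
    by (simp add: mark_def algebra_simps)
  then show ?thesis
    using assms by (simp add: sum_subtractf sum.delta)
qed

lemma mark_fraction:
  assumes "distinct ts" "j \<le> length ts"
  shows "mark (ts ! (j - 1)) / (of_nat (F ts j) - (\<Sum>a\<in>set (take j ts). mark a))
       = of_real lam * (if ts ! (j - 1) = T then \<zeta> else 1)
         / (of_real (mu * real ntypes * real (F ts j)) - of_nat j * of_real lam
            + svar * of_nat ntypes * (if T \<in> set (take j ts) then 1 else 0))"
proof -
  let ?c = "if T \<in> set (take j ts) then 1 - \<zeta> else 0"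
  have "(\<Sum>a\<in>set (take j ts). mark a) = of_nat j * (of_real load * 1) - of_real load * ?c"
    using sum_mark[of "set (take j ts)"] card_set_take_distinct[OF assms] by simp
  then have "mark (ts ! (j - 1)) / (of_nat (F ts j) - (\<Sum>a\<in>set (take j ts). mark a))
      = (of_real load * (if ts ! (j - 1) = T then \<zeta> else 1))
        / (of_nat (F ts j) - of_nat j * (of_real load * 1) + of_real load * ?c)"
    by (simp add: mark_def diff_diff_eq2)
  also have "\<dots> = (of_real lam * (if ts ! (j - 1) = T then \<zeta> else 1))
        / (of_real (mu * real ntypes * real (F ts j)) - of_nat j * of_real lam * 1 + of_real lam * ?c)"
    by (rule load_fraction_eq)
  finally show ?thesis
    by (cases "T \<in> set (take j ts)") (simp_all add: svar_ntypes)
qed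

lemma tuple_sum_mark_closed_form:
  "of_real (p []) * tuple_sum mark Ty {} = sojourn_closed_form T svar (p [])"
  unfolding tuple_sum_def Diff_empty sojourn_closed_form_def sum_distinct_lists_Types sum_distrib_left
proof (intro sum.cong refl)
  fix i ts assume "ts \<in> Tuples K d i"
  then have ts: "length ts = i" "distinct ts" by (auto simp: Tuples_def)
  define e where "e j = (if ts ! (j - 1) = T then \<zeta> else 1)" for j
  define den where "den j = complex_of_real (mu * real ntypes * real (F ts j))
      - of_nat j * complex_of_real lam + svar * of_nat ntypes * (if T \<in> set (take j ts) then 1 else 0)" for j
  have "tuple_weight mark {} ts = (\<Prod>j=1..i. of_real lam * e j / den j)"
    unfolding tuple_weight_F ts(1) e_def den_def
    using mark_fraction[OF ts(2)] ts(1) by (intro prod.cong refl) auto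
  also have "\<dots> = of_real lam ^ i * (\<Prod>j=1..i. e j) / (\<Prod>j=1..i. den j)"
    by (simp add: prod_dividef prod.distrib)
  also have "(\<Prod>j=1..i. e j) = (\<Prod>a\<in>set ts. if a = T then \<zeta> else 1)"
    unfolding e_def ts(1)[symmetric] by (rule prod_nth_distinct[OF ts(2)])
  also have "\<dots> = (of_real lam - svar * of_nat ntypes * (if T \<in> set ts then 1 else 0)) / of_real lam"
    using svar_ntypes lam_pos by (simp add: prod.If_cases field_simps)
  finally show "of_real (p []) * tuple_weight mark {} ts = sojourn_term T svar (p []) i ts"
    by (simp add: sojourn_term_def den_def)
qed

end

lemma infsum_eq_suminf_from_nat_into:
  fixes f :: "'a \<Rightarrow> 'b::banach"
  assumes "countable I" "infinite I" "f summable_on I"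
  shows "infsum f I = (\<Sum>n. f (from_nat_into I n))"
proof -
  have e: "bij_betw (from_nat_into I) UNIV I"
    by (rule bij_betw_from_nat_into[OF assms(1,2)])
  have "(\<lambda>n. f (from_nat_into I n)) summable_on UNIV"
    using summable_on_reindex_bij_betw[OF e, of f] assms(3) by simp
  then have "(\<lambda>n. f (from_nat_into I n)) sums infsum (\<lambda>n. f (from_nat_into I n)) UNIV"
    by (simp add: has_sum_imp_sums)
  then show ?thesis
    using infsum_reindex_bij_betw[OF e, of f] by (simp add: sums_iff)
qed

lemma holomorphic_on_infsum:
  fixes f :: "'a \<Rightarrow> complex \<Rightarrow> complex"
  assumes S: "open S" and I: "countable I"
    and hol: "\<And>x. x \<in> I \<Longrightarrow> f x holomorphic_on S"
    and M: "M summable_on I" "\<And>x. x \<in> I \<Longrightarrow> M x \<ge> 0"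
    and bound: "\<And>x s. x \<in> I \<Longrightarrow> s \<in> S \<Longrightarrow> norm (f x s) \<le> M x"
  shows "(\<lambda>s. infsum (\<lambda>x. f x s) I) holomorphic_on S"
proof (cases "finite I")
  case True
  then show ?thesis
    using hol by (simp add: holomorphic_on_sum)
next
  case False
  define e where "e = from_nat_into I"
  have "bij_betw e UNIV I"
    unfolding e_def using bij_betw_from_nat_into[OF I False] .
  then have eI: "e n \<in> I" for n by (auto simp: bij_betw_def)
  have "(\<lambda>n. M (e n)) summable_on UNIV"
    using summable_on_reindex_bij_betw[OF \<open>bij_betw e UNIV I\<close>, of M] M(1) by simp
  then have Me: "summable (\<lambda>n. M (e n))"
    using summable_on_UNIV_nonneg_real_iff[of "\<lambda>n. M (e n)"] M(2)[OF eI] by simp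
  have eq: "infsum (\<lambda>x. f x s) I = (\<Sum>n. f (e n) s)" if s: "s \<in> S" for s
    unfolding e_def using I False
    by (rule infsum_eq_suminf_from_nat_into, intro summable_on_norm_le[OF M(1)] bound[OF _ s])
  have "(\<lambda>s. \<Sum>n. f (e n) s) holomorphic_on S"
  proof (rule holomorphic_uniform_sequence[OF S])
    show "(\<lambda>s. \<Sum>i<n. f (e i) s) holomorphic_on S" for n
      using hol eI by (intro holomorphic_on_sum) auto
    fix s assume "s \<in> S"
    then obtain r where r: "r > 0" "cball s r \<subseteq> S"
      using S open_contains_cball by blast
    have "uniform_limit (cball s r) (\<lambda>n s. \<Sum>i<n. f (e i) s) (\<lambda>s. \<Sum>n. f (e n) s) sequentially"
    proof (rule Weierstrass_m_test[OF _ Me])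
      fix n z assume "z \<in> cball s r"
      with r(2) have "z \<in> S" by (rule subsetD)
      then show "norm (f (e n) z) \<le> M (e n)"
        by (rule bound[OF eI])
    qed
    with r show "\<exists>d>0. cball s d \<subseteq> S \<and>
        uniform_limit (cball s d) (\<lambda>n s. \<Sum>i<n. f (e i) s) (\<lambda>s. \<Sum>n. f (e n) s) sequentially"
      by blast
  qed
  then show ?thesis
    by (rule holomorphic_transform) (simp add: eq)
qed

context coc
begin

lemma tagged_instance:
  assumes st: "stationary_dist K d lam mu p" and T: "T \<in> Ty"
    and s: "norm (s - of_real (lam / real ntypes)) < lam / real ntypes"
  shows "tagged K d lam mu p T (1 - s * of_nat ntypes / of_real lam)"
    and "tagged.svar K d lam (1 - s * of_nat ntypes / of_real lam) = s"
proof -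
  have "1 - s * of_nat ntypes / of_real lam = - (s - of_real (lam / real ntypes)) * (of_nat ntypes / of_real lam)"
    using lam_pos ntypes_pos by (simp add: field_simps)
  then have "norm (1 - s * of_nat ntypes / of_real lam) = norm (s - of_real (lam / real ntypes)) * (real ntypes / lam)"
    using lam_pos by (simp add: norm_mult norm_divide norm_minus_commute)
  also have "\<dots> < (lam / real ntypes) * (real ntypes / lam)"
    using s lam_pos ntypes_pos by (intro mult_strict_right_mono) auto
  also have "\<dots> = 1" using lam_pos ntypes_pos by simp
  finally show inst: "tagged K d lam mu p T (1 - s * of_nat ntypes / of_real lam)"
    using st T by unfold_locales
  show "tagged.svar K d lam (1 - s * of_nat ntypes / of_real lam) = s"
    unfolding tagged.svar_def[OF inst] using lam_pos ntypes_pos by (simp add: field_simps)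
qed

text \<open>Near \<open>s = lam / ntypes\<close> the mark \<open>\<zeta> = 1 - s * ntypes / lam\<close> lies in the unit disc, so every
  tagged type gives the closed form, which does not depend on the type.\<close>

lemma sojourn_LST_disc:
  assumes st: "stationary_dist K d lam mu p" and t1: "t1 \<in> Ty"
    and s: "norm (s - of_real (lam / real ntypes)) < lam / real ntypes"
  shows "sojourn_LST K d mu p s = sojourn_closed_form t1 s (p [])"
proof -
  define c where "c = complex_of_real (p []) / of_nat ntypes"
  have p0: "p [] > 0" by (rule stationary_empty_pos[OF st])
  have each: "((\<lambda>x. c * (of_real (product_form x) * tagged_lt mu s (x @ [T])))
      has_sum c * (sojourn_closed_form t1 s (p []) / of_real (p []))) St" if T: "T \<in> Ty" for T
  proof -
    interpret tagged K d lam mu p T "1 - s * of_nat ntypes / of_real lam"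
      by (rule tagged_instance(1)[OF st T s])
    have svar: "svar = s" by (rule tagged_instance(2)[OF st T s])
    have "tuple_sum mark Ty {} = sojourn_closed_form T s (p []) / of_real (p [])"
      using tuple_sum_mark_closed_form p0 unfolding svar by (simp add: field_simps)
    then have "((\<lambda>x. of_real (product_form x) * tagged_lt mu s (x @ [T]))
        has_sum sojourn_closed_form T s (p []) / of_real (p [])) St"
      using has_sum_product_form_lst unfolding lst_def svar by simp
    from has_sum_cmult_right[OF this, of c] show ?thesis
      using sojourn_closed_form_type_indep[OF T t1] by simp
  qed
  have "sojourn_LST K d mu p s
      = infsum (\<lambda>x. \<Sum>T\<in>Ty. c * (of_real (product_form x) * tagged_lt mu s (x @ [T]))) St"
    unfolding sojourn_LST_def using stationary_product_form[OF st]
    by (intro infsum_cong) (simp add: c_def sum_distrib_left sum_divide_distrib mult_ac)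
  also have "\<dots> = (\<Sum>T\<in>Ty. c * (sojourn_closed_form t1 s (p []) / of_real (p [])))"
    by (rule infsumI, rule has_sum_sum[OF finite_Types each])
  also have "\<dots> = sojourn_closed_form t1 s (p [])"
    using p0 ntypes_pos by (simp add: card_Ty c_def)
  finally show ?thesis .
qed

lemma countable_St: "countable St"
  using countable_finite[OF finite_Types] by (simp add: States_def lists_eq_set[symmetric])

lemma holomorphic_sojourn_LST:
  assumes st: "stationary_dist K d lam mu p"
  shows "sojourn_LST K d mu p holomorphic_on {s. Re s > 0}"
  unfolding sojourn_LST_def
proof (rule holomorphic_on_infsum[OF open_halfspace_Re_gt countable_St])
  show "p summable_on St" "\<And>x. x \<in> St \<Longrightarrow> p x \<ge> 0"
    using st by (auto simp: stationary_dist_def summable_on_def)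
  show "(\<lambda>s. complex_of_real (p x) * ((\<Sum>T\<in>Ty. tagged_lt mu s (x @ [T])) / of_nat ntypes))
      holomorphic_on {s. Re s > 0}" for x
    using mu_pos ntypes_pos by (intro holomorphic_intros holomorphic_tagged_lt) auto
  fix x s assume x: "x \<in> St" and s: "s \<in> {s. Re s > 0}"
  have "norm (\<Sum>T\<in>Ty. tagged_lt mu s (x @ [T])) \<le> (\<Sum>T\<in>Ty. 1)"
    using norm_tagged_lt_le_1 mu_pos s by (intro sum_norm_le) auto
  then have "norm ((\<Sum>T\<in>Ty. tagged_lt mu s (x @ [T])) / of_nat ntypes) \<le> 1"
    using ntypes_pos by (simp add: norm_divide card_Ty)
  moreover have "p x \<ge> 0" using st x by (simp add: stationary_dist_def)
  ultimately show "norm (complex_of_real (p x) * ((\<Sum>T\<in>Ty. tagged_lt mu s (x @ [T])) / of_nat ntypes)) \<le> p x"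
    unfolding norm_mult norm_of_real by (metis abs_of_nonneg mult_left_le)
qed

lemma sojourn_denominator_pos:
  assumes st: "stationary_dist K d lam mu p" and ts: "ts \<in> Tuples K d i" and j: "j \<in> {1..i}"
  shows "real j * lam < mu * real ntypes * real (F ts j)"
proof -
  have A: "set (take j ts) \<subseteq> Ty" "card (set (take j ts)) = j"
    using ts j card_set_take_distinct[of ts j] by (auto simp: Tuples_def dest: in_set_takeD)
  moreover have "set (take j ts) \<noteq> {}"
    using A(2) j by auto
  ultimately have "real j * load < real (F ts j)"
    using stability_condition[OF st, of "set (take j ts)"] by (simp add: F_def)
  then have "real j * load * (mu * real ntypes) < real (F ts j) * (mu * real ntypes)"
    using mu_pos ntypes_pos by (intro mult_strict_right_mono) auto
  then show ?thesis
    using mu_pos ntypes_pos by (simp add: load_def mult_ac)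
qed

lemma holomorphic_sojourn_closed_form:
  assumes st: "stationary_dist K d lam mu p"
  shows "(\<lambda>s. sojourn_closed_form t1 s (p [])) holomorphic_on {s. Re s > 0}"
  unfolding sojourn_closed_form_def sojourn_term_def
proof (intro holomorphic_on_sum)
  fix i ts assume ts: "ts \<in> Tuples K d i"
  have "complex_of_real (mu * real ntypes * real (F ts j)) - of_nat j * complex_of_real lam
        + s * of_nat ntypes * (if t1 \<in> set (take j ts) then 1 else 0) \<noteq> 0"
    if "Re s > 0" "j \<in> {1..i}" for s j
  proof -
    have "0 < Re (complex_of_real (mu * real ntypes * real (F ts j)) - of_nat j * complex_of_real lam
        + s * of_nat ntypes * (if t1 \<in> set (take j ts) then 1 else 0))"
      using sojourn_denominator_pos[OF st ts that(2)] that(1) by (simp add: add_pos_nonneg)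
    then show ?thesis
      by (metis less_irrefl zero_complex.sel(1))
  qed
  then show "(\<lambda>s. (complex_of_real lam - s * of_nat ntypes * (if t1 \<in> set ts then 1 else 0))
      / complex_of_real lam * (complex_of_real lam ^ i * complex_of_real (p []) /
        (\<Prod>j=1..i. complex_of_real (mu * real ntypes * real (F ts j)) - of_nat j * complex_of_real lam
                    + s * of_nat ntypes * (if t1 \<in> set (take j ts) then 1 else 0))))
      holomorphic_on {s. Re s > 0}"
    using lam_pos by (intro holomorphic_intros) auto
qed

theorem sojourn_LST_closed_form:
  assumes st: "stationary_dist K d lam mu p" and t1: "t1 \<in> Ty" and s: "Re s > 0"
  shows "sojourn_LST K d mu p s = sojourn_closed_form t1 s (p [])"
proof (rule analytic_continuation_open[where s = "ball (of_real (lam / real ntypes)) (lam / real ntypes)"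
      and s' = "{s. Re s > 0}" and f = "sojourn_LST K d mu p" and g = "\<lambda>s. sojourn_closed_form t1 s (p [])"])
  have r: "lam / real ntypes > 0" using lam_pos ntypes_pos by simp
  then show "ball (complex_of_real (lam / real ntypes)) (lam / real ntypes) \<noteq> {}" by simp
  show "ball (complex_of_real (lam / real ntypes)) (lam / real ntypes) \<subseteq> {s. Re s > 0}"
  proof
    fix z assume "z \<in> ball (complex_of_real (lam / real ntypes)) (lam / real ntypes)"
    then have "lam / real ntypes - Re z < lam / real ntypes"
      using complex_Re_le_cmod[of "of_real (lam / real ntypes) - z"] by (simp add: dist_norm)
    then show "z \<in> {s. Re s > 0}" by simp
  qed
  show "z \<in> ball (complex_of_real (lam / real ntypes)) (lam / real ntypes) \<Longrightarrow>
        sojourn_LST K d mu p z = sojourn_closed_form t1 z (p [])" for z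
    by (rule sojourn_LST_disc[OF st t1]) (simp add: dist_norm norm_minus_commute)
  show "sojourn_LST K d mu p holomorphic_on {s. Re s > 0}"
    by (rule holomorphic_sojourn_LST[OF st])
  show "(\<lambda>s. sojourn_closed_form t1 s (p [])) holomorphic_on {s. Re s > 0}"
    by (rule holomorphic_sojourn_closed_form[OF st])
  show "connected {s. Re s > 0}"
    by (rule convex_connected[OF convex_halfspace_Re_gt])
  show "s \<in> {s. Re s > 0}" using s by simp
qed (simp_all add: open_halfspace_Re_gt)

end

theorem mainTheorem11:
  fixes K d :: nat and lam mu :: real and p :: "nat set list \<Rightarrow> real"
    and z s :: complex and t1 :: "nat set"
  assumes "1 \<le> d" and "d \<le> K" and "lam > 0" and "mu > 0"
    and "stationary_dist K d lam mu p"
    and "t1 \<in> Types K d"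
    and "norm z < 1" and "Re s > 0"
  shows "gen_fun_M K d p z =
           (\<Sum>i=0..(K choose d). \<Sum>ts\<in>Tuples K d i.
              (complex_of_real lam * z) ^ i * complex_of_real (p []) /
              (\<Prod>j=1..i. complex_of_real (mu * real (K choose d) * real (F ts j))
                          - of_nat j * complex_of_real lam * z))
       \<and> sojourn_LST K d mu p s =
           (\<Sum>i=0..(K choose d). \<Sum>ts\<in>Tuples K d i.
              (complex_of_real lam - s * of_nat (K choose d) * (if t1 \<in> set ts then 1 else 0))
                / complex_of_real lam
              * (complex_of_real lam ^ i * complex_of_real (p []) /
                 (\<Prod>j=1..i. complex_of_real (mu * real (K choose d) * real (F ts j))
                             - of_nat j * complex_of_real lam
                             + s * of_nat (K choose d) * (if t1 \<in> set (take j ts) then 1 else 0))))"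
proof -
  interpret coc K d lam mu
    using assms(1-4) by unfold_locales
  show ?thesis
    using gen_fun_M_closed_form[OF assms(5,7)] sojourn_LST_closed_form[OF assms(5,6,8)]
    unfolding sojourn_closed_form_def sojourn_term_def by simp
qed

end
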